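(* Let $s\le\ell$ be positive integers and consider the instance of Problem 1 (defined in the context) with these parameters. Let $\Omega_{s,\mathbf{i}}$ ($\mathbf{i}\in\mathcal{I}$) be the unique elements of $\mathcal{R}$ with $\deg_{\mathcal{H}}\Omega_{s,\mathbf{i}}\le\deg_{\mathcal{H}}\Lambda_s+|\mathbf{i}|(2g-1)$ and $\Lambda_s(\mathbf{f}-\mathbf{R})^{\mathbf{i}}=G^{|\mathbf{i}|}\Omega_{s,\mathbf{i}}$. Then $$\lambda_{\mathbf{i}}=\Omega_{s,\mathbf{i}}\ (\mathbf{i}\in\mathcal{I}),\qquad \psi_{\mathbf{j}}=\Lambda_s\mathbf{f}^{\mathbf{j}}\ (\mathbf{j}\in\mathcal{J})$$ is a solution of Problem 1 of degree $\tau=\deg_{\mathcal{H}}\Lambda_s$, where $s|\mathcal{E}|\le\tau\le s|\mathcal{E}|+g$.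
   Context: Let $q$ be a prime power. The Hermitian curve over $\mathbb{F}_{q^2}$ is the smooth projective plane curve with affine equation $Y^q+Y=X^{q+1}$; genus $g=\tfrac12q(q-1)$, affine rational points $P_1,\dots,P_n$ ($n=q^3$), point at infinity $P_\infty$. $\mathcal{R}=\bigcup_{m\ge0}\mathcal{L}(mP_\infty)=\mathbb{F}_{q^2}[X,Y]/(Y^q+Y-X^{q+1})$ with basis $\{X^iY^j:i\ge0,0\le j<q\}$; $\deg_{\mathcal{H}}f=-v_{P_\infty}(f)$, so $\deg_{\mathcal{H}}(X^iY^j)=iq+j(q+1)$; $f\ne0$ is monic if the coefficient of its basis monomial of largest $\deg_{\mathcal{H}}$ is $1$. Fix integers $h\ge1$ and $m_{\mathrm H}$ with $2(g-1)<m_{\mathrm H}<n$. Let $\mathbf{f}=(f_1,\dots,f_h)\in\mathcal{L}(m_{\mathrm H}P_\infty)^h$, $\mathbf{r}=\mathbf{c}+\mathbf{e}\in\mathbb{F}_{q^2}^{h\times n}$ where $\mathbf{c}$ has $i$-th row $(f_i(P_1),\dots,f_i(P_n))$, and $\mathcal{E}$ the set of indices of nonzero columns of $\mathbf{e}$. $\Lambda_s$ is the unique monic element of minimal $\deg_{\mathcal{H}}$ of $\{\Lambda\in\mathcal{R}:v_{P_i}(\Lambda)\ge s\ \forall i\in\mathcal{E}\}$. $\mathbf{R}=(R_1,\dots,R_h)$, $R_i\in\mathcal{R}$, $\deg_{\mathcal{H}}R_i<n+2g$, $R_i(P_j)=r_{i,j}$; $G=X^{q^2}-X$. Vector notation for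 $\mathbf{i},\mathbf{j}\in\mathbb{Z}_{\ge0}^h$: $|\mathbf{i}|=\sum_\mu i_\mu$; $\mathbf{i}\preceq\mathbf{j}$ componentwise; $\mathbf{a}^{\mathbf{i}}=\prod_\mu a_\mu^{i_\mu}$; $\binom{\mathbf{j}}{\mathbf{i}}=\prod_\mu\binom{j_\mu}{i_\mu}$. Problem 1: given $s\le\ell$, let $\mathcal{I}=\{\mathbf{i}\in\mathbb{Z}_{\ge0}^h:|\mathbf{i}|<s\}$, $\mathcal{J}=\{\mathbf{j}\in\mathbb{Z}_{\ge0}^h:1\le|\mathbf{j}|\le\ell\}$, and $A_{\mathbf{i},\mathbf{j}}=\binom{\mathbf{j}}{\mathbf{i}}\mathbf{R}^{\mathbf{j}-\mathbf{i}}G^{|\mathbf{i}|}\in\mathcal{R}$ (which is $0$ when $\mathbf{i}\not\preceq\mathbf{j}$). A solution is a family $\lambda_{\mathbf{i}},\psi_{\mathbf{j}}\in\mathcal{R}$ ($\mathbf{i}\in\mathcal{I},\mathbf{j}\in\mathcal{J}$) with $\lambda_{\mathbf{0}}$ monic such that: $\psi_{\mathbf{j}}=\sum_{\mathbf{i}\in\mathcal{I}}\lambda_{\mathbf{i}}A_{\mathbf{i},\mathbf{j}}$ for $|\mathbf{j}|<s$; $\psi_{\mathbf{j}}\equiv\sum_{\mathbf{i}\in\mathcal{I}}\lambda_{\mathbf{i}}A_{\mathbf{i},\mathbf{j}}\bmod G^s$ for $|\mathbf{j}|\ge s$; $\deg_{\mathcal{H}}\lambda_{\mathbf{0}}\ge\deg_{\mathcal{H}}\lambda_{\mathbf{i}}-|\mathbf{i}|(2g-1)$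 for all $\mathbf{i}\in\mathcal{I}$; $\deg_{\mathcal{H}}\lambda_{\mathbf{0}}\ge\deg_{\mathcal{H}}\psi_{\mathbf{j}}-|\mathbf{j}|m_{\mathrm H}$ for all $\mathbf{j}\in\mathcal{J}$. The degree of a solution is $\deg_{\mathcal{H}}\lambda_{\mathbf{0}}$. *)

theory Defs
  imports "HOL-Computational_Algebra.Computational_Algebra"
begin

text \<open>Elements of F[X][Y] are represented as 'a poly poly: the outer variable is Y,
  the coefficients are polynomials in X.  The ring R = F[X,Y]/(Y^q+Y-X^(q+1)) is
  represented by its reduced representatives, i.e. polynomials of Y-degree < q,
  which correspond exactly to the basis X^i Y^j (i \<ge> 0, 0 \<le> j < q).
  Equalities in R are congruences modulo the Hermitian polynomial.\<close>

type_synonym 'a bpoly = "'a poly poly"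

definition Xp :: "'a::comm_ring_1 bpoly" where "Xp = [: [:0, 1:] :]"
definition Yp :: "'a::comm_ring_1 bpoly" where "Yp = [:0, 1:]"

definition hermH :: "nat \<Rightarrow> 'a::comm_ring_1 bpoly" where
  "hermH q = Yp ^ q + Yp - Xp ^ (q + 1)"

definition inR :: "nat \<Rightarrow> 'a::comm_ring_1 bpoly \<Rightarrow> bool" where
  "inR q p \<longleftrightarrow> degree p < q"

definition heq :: "nat \<Rightarrow> 'a::comm_ring_1 bpoly \<Rightarrow> 'a bpoly \<Rightarrow> bool" where
  "heq q a b \<longleftrightarrow> hermH q dvd (a - b)"

text \<open>The reduced representative (remainder by the monic polynomial hermH q).\<close>
definition hred :: "nat \<Rightarrow> 'a::idom bpoly \<Rightarrow> 'a bpoly" where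
  "hred q p = pseudo_mod p (hermH q)"

definition hcoeff :: "'a::zero bpoly \<Rightarrow> nat \<Rightarrow> nat \<Rightarrow> 'a" where
  "hcoeff p i j = coeff (coeff p j) i"

text \<open>deg_H (X^i Y^j) = i q + j (q+1); deg_H of a nonzero reduced element is the maximum
  over its support.  (Only used for nonzero elements.)\<close>
definition degH :: "nat \<Rightarrow> 'a::zero bpoly \<Rightarrow> int" where
  "degH q p = Max {int (i * q + j * (q + 1)) | i j. hcoeff p i j \<noteq> 0}"

definition monicH :: "nat \<Rightarrow> 'a::{zero,one} bpoly \<Rightarrow> bool" where
  "monicH q p \<longleftrightarrow> p \<noteq> 0 \<and>
     (\<forall>i j. hcoeff p i j \<noteq> 0 \<and> int (i * q + j * (q + 1)) = degH q p \<longrightarrow> hcoeff p i j = 1)"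

text \<open>L(m P_infty): elements of R of deg_H at most m (0 included).\<close>
definition inL :: "nat \<Rightarrow> int \<Rightarrow> 'a::comm_ring_1 bpoly \<Rightarrow> bool" where
  "inL q m p \<longleftrightarrow> inR q p \<and> (p = 0 \<or> degH q p \<le> m)"

definition hpts :: "nat \<Rightarrow> ('a::comm_ring_1 \<times> 'a) set" where
  "hpts q = {(a, b). b ^ q + b = a ^ (q + 1)}"

definition evalH :: "'a::comm_ring_1 bpoly \<Rightarrow> 'a \<times> 'a \<Rightarrow> 'a" where
  "evalH p P = poly (map_poly (\<lambda>c. poly c (fst P)) p) (snd P)"

text \<open>v_P(f) \<ge> s for f in R at the affine point P=(a,b): f lies in m_P^s O_P, where O_P is the
  local ring of R at the maximal ideal M_P = (X-a, Y-b); i.e. there is g with g(P) \<noteq> 0 such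
  that g f \<in> M_P^s in R.  The ideal M_P^s of R is described through its preimage
  (X-a,Y-b)^s + (Y^q+Y-X^(q+1)) in F[X][Y].\<close>
definition val_ge :: "nat \<Rightarrow> 'a::comm_ring_1 \<times> 'a \<Rightarrow> nat \<Rightarrow> 'a bpoly \<Rightarrow> bool" where
  "val_ge q P s f \<longleftrightarrow>
     (\<exists>g c u. evalH g P \<noteq> 0 \<and>
        g * f = (\<Sum>k\<le>s. c k * (Xp - [:[:fst P:]:]) ^ k * (Yp - [:[:snd P:]:]) ^ (s - k))
                + u * hermH q)"

definition Gp :: "nat \<Rightarrow> 'a::comm_ring_1 bpoly" where
  "Gp q = Xp ^ (q ^ 2) - Xp"

text \<open>Multi-indices in Z_{\<ge>0}^h, represented as functions nat \<Rightarrow> nat vanishing from h on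
  (components indexed 0..h-1).\<close>
definition mvecs :: "nat \<Rightarrow> (nat \<Rightarrow> nat) set" where
  "mvecs h = {i. \<forall>\<mu>\<ge>h. i \<mu> = 0}"

definition mabs :: "nat \<Rightarrow> (nat \<Rightarrow> nat) \<Rightarrow> nat" where
  "mabs h i = (\<Sum>\<mu><h. i \<mu>)"

definition mpow :: "nat \<Rightarrow> (nat \<Rightarrow> 'a::comm_ring_1 bpoly) \<Rightarrow> (nat \<Rightarrow> nat) \<Rightarrow> 'a bpoly" where
  "mpow h a i = (\<Prod>\<mu><h. a \<mu> ^ i \<mu>)"

definition mbinom :: "nat \<Rightarrow> (nat \<Rightarrow> nat) \<Rightarrow> (nat \<Rightarrow> nat) \<Rightarrow> nat" where
  "mbinom h j i = (\<Prod>\<mu><h. j \<mu> choose i \<mu>)"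

definition Iset :: "nat \<Rightarrow> nat \<Rightarrow> (nat \<Rightarrow> nat) set" where
  "Iset h s = {i \<in> mvecs h. mabs h i < s}"

definition Jset :: "nat \<Rightarrow> nat \<Rightarrow> (nat \<Rightarrow> nat) set" where
  "Jset h l = {j \<in> mvecs h. 1 \<le> mabs h j \<and> mabs h j \<le> l}"

text \<open>A_{i,j} = binom(j,i) R^(j-i) G^|i|  (zero if not i \<preceq> j, since then a binomial vanishes).\<close>
definition Acoef :: "nat \<Rightarrow> nat \<Rightarrow> (nat \<Rightarrow> 'a::comm_ring_1 bpoly) \<Rightarrow> (nat \<Rightarrow> nat) \<Rightarrow> (nat \<Rightarrow> nat) \<Rightarrow> 'a bpoly" where
  "Acoef q h Rv i j = of_nat (mbinom h j i) * mpow h Rv (\<lambda>\<mu>. j \<mu> - i \<mu>) * Gp q ^ mabs h i"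

definition hgenus :: "nat \<Rightarrow> int" where
  "hgenus q = int (q * (q - 1) div 2)"

text \<open>Solutions of Problem 1.  Conditions on deg_H of zero elements are vacuous.\<close>
definition problem1_solution ::
  "nat \<Rightarrow> nat \<Rightarrow> nat \<Rightarrow> nat \<Rightarrow> int \<Rightarrow> (nat \<Rightarrow> 'a::comm_ring_1 bpoly)
   \<Rightarrow> ((nat \<Rightarrow> nat) \<Rightarrow> 'a bpoly) \<Rightarrow> ((nat \<Rightarrow> nat) \<Rightarrow> 'a bpoly) \<Rightarrow> bool" where
  "problem1_solution q h s l mH Rv lam psi \<longleftrightarrow>
     (\<forall>i\<in>Iset h s. inR q (lam i)) \<and> (\<forall>j\<in>Jset h l. inR q (psi j)) \<and>
     monicH q (lam (\<lambda>_. 0)) \<and>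
     (\<forall>j\<in>Jset h l. mabs h j < s \<longrightarrow>
         heq q (psi j) (\<Sum>i\<in>Iset h s. lam i * Acoef q h Rv i j)) \<and>
     (\<forall>j\<in>Jset h l. s \<le> mabs h j \<longrightarrow>
         (\<exists>t. heq q (psi j) ((\<Sum>i\<in>Iset h s. lam i * Acoef q h Rv i j) + Gp q ^ s * t))) \<and>
     (\<forall>i\<in>Iset h s. lam i \<noteq> 0 \<longrightarrow>
         degH q (lam (\<lambda>_. 0)) \<ge> degH q (lam i) - int (mabs h i) * (2 * hgenus q - 1)) \<and>
     (\<forall>j\<in>Jset h l. psi j \<noteq> 0 \<longrightarrow>
         degH q (lam (\<lambda>_. 0)) \<ge> degH q (psi j) - int (mabs h j) * mH)"

end

(*
  The solution part is an identity in the coordinate ring: expanding f^j = (R + (f - R))^j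
  multinomially, the terms with |i| < s are Omega_i A_(i,j) by the defining relation of
  Omega_i, while every term Lambda (f - R)^i with |i| >= s vanishes to order s at all q^3
  rational points (Lambda at the error positions, f - R at all others) and is therefore a
  multiple of G^s.  The degree conditions hold because the weighted degree is subadditive and
  is not increased by reduction modulo the curve equation.

  For the bounds on tau = deg Lambda_s: the product of the translates of an element L under the
  automorphisms Y -> Y + beta (beta^q + beta = 0) is a polynomial c(X) in X alone with
  deg c <= deg L, and (X - a)^(s |E_a|) divides c for every abscissa a, where E_a are the error
  positions above a; hence s |E| <= tau.  Conversely the elements of weighted degree at most
  s |E| + g form a space of dimension at least s |E| + 1, as only the g Weierstrass gaps are
  missing among the weights, and vanishing to order s at the points of E imposes s |E| linear
  conditions; so some nonzero element of that degree vanishes as required, and tau <= s |E| + g.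
*)
theory Submission
  imports Defs "HOL-Number_Theory.Residues"
begin

text \<open>\<open>HOL-Number_Theory.Residues\<close> (imported for \<open>CHAR_dvd_CARD\<close>) brings the
  \<open>HOL-Algebra\<close> constants \<open>coeff\<close>, \<open>monom\<close>, \<open>smult\<close> and \<open>order\<close> into scope, which would
  shadow those of \<open>Polynomial\<close>.\<close>

hide_const (open) up_ring.coeff up_ring.monom module.smult Coset.order

lemma evalH_altdef: "evalH p P = poly (poly p [:snd P:]) (fst P)"
  by (induction p) (simp_all add: evalH_def map_poly_pCons)

lemma evalH_add [simp]: "evalH (a + b) P = evalH a P + evalH b P"
  and evalH_diff [simp]: "evalH (a - b) P = evalH a P - evalH b P"
  and evalH_mult [simp]: "evalH (a * b) P = evalH a P * evalH b P"
  and evalH_power [simp]: "evalH (a ^ n) P = evalH a P ^ n"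
  and evalH_1 [simp]: "evalH 1 P = 1"
  and evalH_const [simp]: "evalH [:c:] P = poly c (fst P)"
  and evalH_Xp [simp]: "evalH Xp P = fst P"
  and evalH_Yp [simp]: "evalH Yp P = snd P"
  by (simp_all add: evalH_altdef poly_power Xp_def Yp_def)

lemma evalH_smult [simp]: "evalH (smult c p) P = poly c (fst P) * evalH p P"
  by (simp add: evalH_altdef)

lemma evalH_hermH: "P \<in> hpts q \<Longrightarrow> evalH (hermH q) P = 0"
  by (auto simp: hermH_def hpts_def)

lemma heq_refl [simp]: "heq q a a"
  by (simp add: heq_def)

lemma heq_sym: "heq q a b \<Longrightarrow> heq q b a"
  unfolding heq_def by (metis dvd_minus_iff minus_diff_eq)

lemma heq_trans [trans]: "heq q a b \<Longrightarrow> heq q b c \<Longrightarrow> heq q a c"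
  unfolding heq_def by (drule (1) dvd_add) simp

lemma heq_add: "heq q a b \<Longrightarrow> heq q c d \<Longrightarrow> heq q (a + c) (b + d)"
  unfolding heq_def by (drule (1) dvd_add) (simp add: algebra_simps)

lemma heq_diff: "heq q a b \<Longrightarrow> heq q c d \<Longrightarrow> heq q (a - c) (b - d)"
  unfolding heq_def by (drule (1) dvd_diff) (simp add: algebra_simps)

lemma heq_mult:
  assumes "heq q a b" "heq q c d"
  shows "heq q (a * c) (b * d)"
proof -
  have "a * c - b * d = (a - b) * c + b * (c - d)"
    by (simp add: algebra_simps)
  with assms show ?thesis
    unfolding heq_def by (simp add: dvd_add)
qed

lemma heq_mult_left: "heq q a b \<Longrightarrow> heq q (c * a) (c * b)"
  by (rule heq_mult[OF heq_refl])

lemma heq_power: "heq q a b \<Longrightarrow> heq q (a ^ n) (b ^ n)"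
  by (induction n) (auto intro: heq_mult)

lemma heq_sum: "(\<And>x. x \<in> A \<Longrightarrow> heq q (f x) (g x)) \<Longrightarrow> heq q (sum f A) (sum g A)"
  by (induction A rule: infinite_finite_induct) (auto intro: heq_add)

lemma heq_iff: "heq q a b \<longleftrightarrow> (\<exists>u. a = b + u * hermH q)"
  unfolding heq_def dvd_def by (metis add_diff_cancel_left' diff_add_cancel mult.commute)

lemma heq_evalH: "heq q a b \<Longrightarrow> P \<in> hpts q \<Longrightarrow> evalH a P = evalH b P"
  unfolding heq_iff using evalH_hermH by fastforce

lemma hermH_monom:
  "(hermH q :: 'a::comm_ring_1 bpoly) = monom 1 q + monom 1 1 - [:[:0, 1:] ^ (q + 1):]"
proof -
  have "(Yp :: 'a bpoly) ^ n = monom 1 n" for n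
    by (simp add: Yp_def monom_altdef)
  from this[of q] this[of 1] show ?thesis
    by (simp add: hermH_def Xp_def poly_const_pow del: power_Suc)
qed

lemma coeff_hermH:
  "coeff (hermH q :: 'a::comm_ring_1 bpoly) n =
    (if n = q then 1 else 0) + (if n = 1 then 1 else 0) - (if n = 0 then [:0, 1:] ^ (q + 1) else 0)"
  by (cases n) (simp_all add: hermH_monom)

lemma degree_hermH: "2 \<le> q \<Longrightarrow> degree (hermH q :: 'a::comm_ring_1 bpoly) = q"
  by (intro antisym degree_le le_degree) (auto simp: coeff_hermH)

lemma lead_coeff_hermH: "2 \<le> q \<Longrightarrow> lead_coeff (hermH q :: 'a::comm_ring_1 bpoly) = 1"
  by (simp add: degree_hermH coeff_hermH)

lemma hermH_nonzero: "2 \<le> q \<Longrightarrow> (hermH q :: 'a::comm_ring_1 bpoly) \<noteq> 0"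
  using lead_coeff_hermH[of q] by (metis leading_coeff_0_iff zero_neq_one)

lemma reduced_heq_imp_eq:
  fixes a b :: "'a::idom bpoly"
  assumes "2 \<le> q" "inR q a" "inR q b" "heq q a b"
  shows "a = b"
proof -
  obtain u where u: "a - b = hermH q * u"
    using assms(4) unfolding heq_def dvd_def by blast
  have "degree (a - b) < q"
    using assms(2,3) unfolding inR_def by (intro degree_diff_less) auto
  then have "u = 0"
    using u degree_mult_eq[OF hermH_nonzero[OF assms(1)], of u]
      degree_hermH[OF assms(1), where 'a='a]
    by (cases "u = 0") auto
  with u show ?thesis
    by simp
qed

lemma
  fixes p :: "'a::idom bpoly"
  assumes "2 \<le> q"
  shows inR_hred: "inR q (hred q p)" and heq_hred: "heq q p (hred q p)"
proof -
  obtain t r where div: "pseudo_divmod p (hermH q) = (t, r)"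
    by fastforce
  have r: "hred q p = r"
    unfolding hred_def pseudo_mod_def div by simp
  note pd = pseudo_divmod[OF hermH_nonzero[OF assms] div, unfolded lead_coeff_hermH[OF assms]]
  show "inR q (hred q p)"
    using pd(2) assms unfolding r inR_def by (auto simp: degree_hermH)
  show "heq q p (hred q p)"
    using pd(1) unfolding r heq_def by simp
qed

lemma hred_unique:
  fixes p :: "'a::idom bpoly"
  assumes "2 \<le> q" "inR q r" "heq q p r"
  shows "hred q p = r"
  using assms by (meson heq_hred heq_sym heq_trans inR_hred reduced_heq_imp_eq)

lemma hred_heq_cong:
  fixes a b :: "'a::idom bpoly"
  assumes "2 \<le> q" "heq q a b"
  shows "hred q a = hred q b"
  using assms by (meson heq_hred heq_trans hred_unique inR_hred)

section \<open>The weighted degree\<close>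

definition mdeg :: "nat \<Rightarrow> nat \<Rightarrow> nat \<Rightarrow> nat" where
  "mdeg q i j = i * q + j * (q + 1)"

text \<open>\<open>wdeg q p\<close> is \<open>degH q p\<close> as a natural number; unlike \<open>degH q 0 = Max {}\<close>, which is
  unspecified, \<open>wdeg q 0 = 0\<close>.\<close>

definition wdeg :: "nat \<Rightarrow> 'a::zero bpoly \<Rightarrow> nat" where
  "wdeg q p = Max (insert 0 {mdeg q i j | i j. hcoeff p i j \<noteq> 0})"

lemma hcoeff_add [simp]: "hcoeff (a + b) i j = hcoeff a i j + hcoeff b i j"
  by (simp add: hcoeff_def)

lemma hcoeff_minus [simp]: "hcoeff (- a) i j = - hcoeff a i j"
  by (simp add: hcoeff_def)

lemma hcoeff_0 [simp]: "hcoeff 0 i j = 0"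
  by (simp add: hcoeff_def)

lemma hcoeff_smult [simp]: "hcoeff (smult [:c:] p) i j = c * hcoeff p i j"
  by (simp add: hcoeff_def)

lemma hcoeff_monom_monom: "hcoeff (monom (monom c i') j') i j = (if (i', j') = (i, j) then c else 0)"
  by (simp add: hcoeff_def)

lemma hcoeff_sum: "hcoeff (sum f A) i j = (\<Sum>x\<in>A. hcoeff (f x) i j)"
  by (simp add: hcoeff_def coeff_sum)

lemma hcoeff_mult:
  "hcoeff (a * b) i j = (\<Sum>k\<le>j. \<Sum>l\<le>i. hcoeff a l k * hcoeff b (i - l) (j - k))"
  by (simp add: hcoeff_def coeff_mult coeff_sum)

lemma hcoeff_eqI: "(\<And>i j. hcoeff p i j = hcoeff r i j) \<Longrightarrow> p = r"
  unfolding hcoeff_def by (intro poly_eqI) blast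

lemma hcoeff_nonzero_imp:
  assumes "hcoeff p i j \<noteq> 0"
  shows "j \<le> degree p" "i \<le> degree (coeff p j)"
  using assms unfolding hcoeff_def by (auto intro: le_degree)

lemma finite_mdeg_support: "finite {mdeg q i j | i j. hcoeff p i j \<noteq> 0}"
proof -
  have "{(i, j). hcoeff p i j \<noteq> 0} \<subseteq> (\<Union>j\<le>degree p. {..degree (coeff p j)} \<times> {j})"
    using hcoeff_nonzero_imp by fastforce
  then have "finite {(i, j). hcoeff p i j \<noteq> 0}"
    by (rule finite_subset) auto
  moreover have "{mdeg q i j | i j. hcoeff p i j \<noteq> 0} =
      (\<lambda>(i, j). mdeg q i j) ` {(i, j). hcoeff p i j \<noteq> 0}"
    by auto
  ultimately show ?thesis
    by simp
qed

lemma mdeg_le_wdeg: "hcoeff p i j \<noteq> 0 \<Longrightarrow> mdeg q i j \<le> wdeg q p"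
  unfolding wdeg_def using finite_mdeg_support by (intro Max_ge) auto

lemma wdeg_leI: "(\<And>i j. hcoeff p i j \<noteq> 0 \<Longrightarrow> mdeg q i j \<le> w) \<Longrightarrow> wdeg q p \<le> w"
  unfolding wdeg_def using finite_mdeg_support by (intro Max.boundedI) auto

lemma wdeg_attained:
  assumes "p \<noteq> 0"
  obtains i j where "hcoeff p i j \<noteq> 0" "wdeg q p = mdeg q i j"
proof -
  obtain j where "coeff p j \<noteq> 0"
    using assms leading_coeff_0_iff by blast
  then obtain i where "hcoeff p i j \<noteq> 0"
    unfolding hcoeff_def using leading_coeff_0_iff by blast
  then have nonempty: "{mdeg q i j | i j. hcoeff p i j \<noteq> 0} \<noteq> {}"
    by blast
  then have "wdeg q p = Max {mdeg q i j | i j. hcoeff p i j \<noteq> 0}"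
    unfolding wdeg_def using finite_mdeg_support by (subst Max_insert) auto
  also have "\<dots> \<in> {mdeg q i j | i j. hcoeff p i j \<noteq> 0}"
    using nonempty finite_mdeg_support by (rule Max_in[rotated])
  finally show ?thesis
    using that by blast
qed

lemma degH_eq_wdeg: "p \<noteq> 0 \<Longrightarrow> degH q p = int (wdeg q p)"
proof -
  assume "p \<noteq> 0"
  then obtain i0 j0 where top: "hcoeff p i0 j0 \<noteq> 0" "wdeg q p = mdeg q i0 j0"
    by (rule wdeg_attained)
  have "{int (i * q + j * (q + 1)) | i j. hcoeff p i j \<noteq> 0} =
        int ` {mdeg q i j | i j. hcoeff p i j \<noteq> 0}"
    unfolding mdeg_def by blast
  then have "degH q p = Max (int ` {mdeg q i j | i j. hcoeff p i j \<noteq> 0})"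
    unfolding degH_def by simp
  also have "\<dots> = int (wdeg q p)"
  proof (rule Max_eqI)
    show "int (wdeg q p) \<in> int ` {mdeg q i j | i j. hcoeff p i j \<noteq> 0}"
      using top by blast
  qed (use finite_mdeg_support mdeg_le_wdeg in auto)
  finally show ?thesis .
qed

lemma wdeg_0 [simp]: "wdeg q 0 = 0"
  by (simp add: wdeg_def)

lemma wdeg_add: "wdeg q (a + b) \<le> max (wdeg q a) (wdeg q b)"
proof (rule wdeg_leI)
  fix i j
  assume "hcoeff (a + b) i j \<noteq> 0"
  then have "hcoeff a i j \<noteq> 0 \<or> hcoeff b i j \<noteq> 0"
    by auto
  then show "mdeg q i j \<le> max (wdeg q a) (wdeg q b)"
    using mdeg_le_wdeg[of a i j q] mdeg_le_wdeg[of b i j q] by auto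
qed

lemma wdeg_minus [simp]: "wdeg q (- a) = wdeg q (a :: 'a::ab_group_add bpoly)"
  by (simp add: wdeg_def)

lemma wdeg_diff: "wdeg q (a - b) \<le> max (wdeg q a) (wdeg q (b :: 'a::ab_group_add bpoly))"
  using wdeg_add[of q a "- b"] by simp

lemma wdeg_mult: "wdeg q (a * b) \<le> wdeg q a + wdeg q (b :: 'a::comm_ring_1 bpoly)"
proof (rule wdeg_leI)
  fix i j
  assume "hcoeff (a * b) i j \<noteq> 0"
  then obtain k l where kl: "k \<le> j" "l \<le> i" "hcoeff a l k * hcoeff b (i - l) (j - k) \<noteq> 0"
    unfolding hcoeff_mult by (metis (no_types, lifting) atMost_iff sum.neutral)
  then have "mdeg q l k \<le> wdeg q a" "mdeg q (i - l) (j - k) \<le> wdeg q b"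
    by (auto intro!: mdeg_le_wdeg)
  moreover obtain i' j' where "i = l + i'" "j = k + j'"
    using kl(1,2) le_Suc_ex by metis
  then have "mdeg q i j = mdeg q l k + mdeg q (i - l) (j - k)"
    by (simp add: mdeg_def algebra_simps)
  ultimately show "mdeg q i j \<le> wdeg q a + wdeg q b"
    by linarith
qed

lemma wdeg_const_poly: "wdeg q [:c:] \<le> q * degree c"
proof (rule wdeg_leI)
  fix i j
  assume "hcoeff [:c:] i j \<noteq> 0"
  then have "j = 0" "i \<le> degree c"
    using hcoeff_nonzero_imp[of "[:c:]" i j] by (auto simp: hcoeff_def)
  then show "mdeg q i j \<le> q * degree c"
    by (simp add: mdeg_def)
qed

lemma wdeg_const [simp]: "wdeg q [:[:c:]:] = 0"
  using wdeg_const_poly[of q "[:c:]"] by simp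

lemma wdeg_1 [simp]: "wdeg q (1 :: 'a::comm_ring_1 bpoly) = 0"
  using wdeg_const[of q "1 :: 'a"] by (simp only: pCons_one)

lemma wdeg_power: "wdeg q (a ^ n) \<le> n * wdeg q (a :: 'a::comm_ring_1 bpoly)"
  by (induction n) (auto intro: order.trans[OF wdeg_mult])

lemma wdeg_prod: "wdeg q (prod f A) \<le> (\<Sum>x\<in>A. wdeg q (f x :: 'a::comm_ring_1 bpoly))"
  by (induction A rule: infinite_finite_induct) (auto intro: order.trans[OF wdeg_mult])

lemma wdeg_sum:
  "(\<And>x. x \<in> A \<Longrightarrow> wdeg q (f x) \<le> w) \<Longrightarrow> wdeg q (sum f A :: 'a::comm_ring_1 bpoly) \<le> w"
  by (induction A rule: infinite_finite_induct) (auto intro: order.trans[OF wdeg_add])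

lemma wdeg_monom: "wdeg q (monom c k) \<le> q * degree c + k * (q + 1)"
proof (rule wdeg_leI)
  fix i j
  assume "hcoeff (monom c k) i j \<noteq> 0"
  then have "j = k" "i \<le> degree c"
    by (auto simp: hcoeff_def split: if_splits intro: le_degree)
  then show "mdeg q i j \<le> q * degree c + k * (q + 1)"
    by (simp add: mdeg_def)
qed

lemma wdeg_Xp: "wdeg q (Xp :: 'a::comm_ring_1 bpoly) \<le> q"
  using wdeg_const_poly[of q "[:0, 1 :: 'a:]"] by (simp add: Xp_def)

lemma wdeg_Yp: "wdeg q Yp \<le> q + 1"
  using wdeg_monom[of q 1 1] by (simp add: Yp_def monom_altdef)

lemma column_mdeg_le_wdeg:
  "coeff p j \<noteq> 0 \<Longrightarrow> q * degree (coeff p j) + j * (q + 1) \<le> wdeg q p"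
  using mdeg_le_wdeg[of p "degree (coeff p j)" j q] by (simp add: hcoeff_def mdeg_def mult.commute)

lemma wdeg_hermH:
  assumes "1 \<le> q"
  shows "wdeg q (hermH q :: 'a::comm_ring_1 bpoly) \<le> q * (q + 1)"
proof -
  have "wdeg q (Yp ^ q :: 'a bpoly) \<le> q * (q + 1)"
    using wdeg_power[of q Yp q] wdeg_Yp[of q] by (meson mult_le_mono2 order_trans)
  moreover have "wdeg q (Xp ^ (q + 1) :: 'a bpoly) \<le> q * (q + 1)"
    using wdeg_power[of q Xp "q + 1"] wdeg_Xp[of q] by (metis mult.commute mult_le_mono2 order_trans)
  moreover have "wdeg q (Yp :: 'a bpoly) \<le> q * (q + 1)"
    using wdeg_Yp[of q] assms by (metis le_trans mult_1 mult_le_mono1)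
  ultimately show ?thesis
    unfolding hermH_def using wdeg_add[of q "Yp ^ q" "Yp :: 'a bpoly"]
      wdeg_diff[of q "Yp ^ q + Yp" "Xp ^ (q + 1) :: 'a bpoly"]
    by linarith
qed

text \<open>Cancelling the top \<open>Y\<close>-coefficient \<open>c Y\<^sup>d\<close> of \<open>p\<close> by \<open>c Y\<^bsup>d - q\<^esup> H\<close> does not raise the
  weighted degree, because \<open>wdeg q H = q (q + 1)\<close> is attained at \<open>Y\<^sup>q\<close>.\<close>

lemma hermH_division_step:
  fixes p :: "'a::idom bpoly"
  assumes q: "2 \<le> q" and d: "q \<le> degree p"
  defines "m \<equiv> monom (lead_coeff p) (degree p - q)"
  shows "degree (p - m * hermH q) < degree p"
    and "wdeg q m + q * (q + 1) \<le> wdeg q p"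
    and "wdeg q (p - m * hermH q) \<le> wdeg q p"
proof -
  have p0: "p \<noteq> 0"
    using q d by auto
  then have m0: "m \<noteq> 0" and deg_m: "degree m = degree p - q"
    by (simp_all add: m_def degree_monom_eq)
  have deg_mH: "degree (m * hermH q) = degree p"
    using degree_mult_eq[OF m0 hermH_nonzero[OF q]] deg_m degree_hermH[OF q, where 'a='a] d
    by simp
  have "lead_coeff (m * hermH q) = lead_coeff p"
    using deg_m by (simp add: lead_coeff_mult lead_coeff_hermH[OF q] m_def)
  then have top: "coeff (p - m * hermH q) (degree p) = 0"
    using deg_mH by simp
  have le: "degree (p - m * hermH q) \<le> degree p"
    using deg_mH by (metis degree_diff_le order_refl)
  show "degree (p - m * hermH q) < degree p"
  proof (cases "p - m * hermH q = 0")
    case True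
    then show ?thesis
      using q d by simp
  next
    case False
    then have "degree (p - m * hermH q) \<noteq> degree p"
      using top leading_coeff_0_iff by metis
    with le show ?thesis
      by simp
  qed
  have "wdeg q m \<le> q * degree (lead_coeff p) + (degree p - q) * (q + 1)"
    unfolding m_def by (rule wdeg_monom)
  moreover have "q * degree (lead_coeff p) + degree p * (q + 1) \<le> wdeg q p"
    using column_mdeg_le_wdeg[of p "degree p" q] p0 by simp
  moreover have "(degree p - q) * (q + 1) + q * (q + 1) = degree p * (q + 1)"
    using d by (metis add_mult_distrib le_add_diff_inverse2)
  ultimately show wm: "wdeg q m + q * (q + 1) \<le> wdeg q p"
    by linarith
  have "wdeg q (m * hermH q) \<le> wdeg q p"
    using wdeg_mult[of q m "hermH q"] wdeg_hermH[of q, where 'a='a] q wm by linarith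
  then show "wdeg q (p - m * hermH q) \<le> wdeg q p"
    using wdeg_diff[of q p "m * hermH q"] by linarith
qed

lemma reduction_wdeg:
  fixes p :: "'a::idom bpoly"
  assumes q: "2 \<le> q"
  obtains u where "inR q (p - u * hermH q)" "wdeg q (p - u * hermH q) \<le> wdeg q p"
    "u = 0 \<or> wdeg q u + q * (q + 1) \<le> wdeg q p"
proof (induction "degree p" arbitrary: p thesis rule: less_induct)
  case less
  show ?case
  proof (cases "degree p < q")
    case True
    then show ?thesis
      by (intro less.prems[of 0]) (simp_all add: inR_def)
  next
    case False
    then have d: "q \<le> degree p"
      by simp
    define m where "m = monom (lead_coeff p) (degree p - q)"
    note step = hermH_division_step[OF q d, folded m_def]
    obtain u where u: "inR q (p - m * hermH q - u * hermH q)"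
      "wdeg q (p - m * hermH q - u * hermH q) \<le> wdeg q (p - m * hermH q)"
      "u = 0 \<or> wdeg q u + q * (q + 1) \<le> wdeg q (p - m * hermH q)"
      using less.hyps[OF step(1)] by blast
    have eq: "p - (u + m) * hermH q = p - m * hermH q - u * hermH q"
      by (simp add: algebra_simps)
    show ?thesis
    proof (rule less.prems[of "u + m"])
      show "inR q (p - (u + m) * hermH q)"
        unfolding eq by (rule u(1))
      show "wdeg q (p - (u + m) * hermH q) \<le> wdeg q p"
        unfolding eq using u(2) step(3) by linarith
      show "u + m = 0 \<or> wdeg q (u + m) + q * (q + 1) \<le> wdeg q p"
        using u(3) step(2,3) wdeg_add[of q u m] by (cases "u = 0") auto
    qed
  qed
qed

lemma wdeg_hred_le:
  fixes p :: "'a::idom bpoly"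
  assumes "2 \<le> q"
  shows "wdeg q (hred q p) \<le> wdeg q p"
proof -
  obtain u where u: "inR q (p - u * hermH q)" "wdeg q (p - u * hermH q) \<le> wdeg q p"
    using reduction_wdeg[OF assms] by blast
  have "hred q p = p - u * hermH q"
    using assms u(1) by (intro hred_unique) (simp_all add: heq_def)
  with u(2) show ?thesis
    by simp
qed

section \<open>The weighted substitution and the domain property\<close>

lemma map_poly_add_hom:
  assumes "f 0 = 0" "\<And>x y. f (x + y) = f x + f y"
  shows "map_poly f (p + r) = map_poly f p + map_poly f r"
  by (intro poly_eqI) (simp add: coeff_map_poly assms)

lemma map_poly_mult_hom:
  fixes f :: "'a::comm_semiring_1 \<Rightarrow> 'b::comm_semiring_1"
  assumes "f 0 = 0" "\<And>x y. f (x + y) = f x + f y" "\<And>x y. f (x * y) = f x * f y"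
  shows "map_poly f (p * r) = map_poly f p * map_poly f r"
proof (intro poly_eqI)
  fix n
  have "coeff (map_poly f (p * r)) n = f (\<Sum>i\<le>n. coeff p i * coeff r (n - i))"
    by (simp add: coeff_map_poly assms(1) coeff_mult)
  also have "\<dots> = (\<Sum>i\<le>n. f (coeff p i) * f (coeff r (n - i)))"
    by (simp add: sum_comp_morphism[of f, OF assms(1,2), symmetric, unfolded comp_def] assms(3))
  finally show "coeff (map_poly f (p * r)) n = coeff (map_poly f p * map_poly f r) n"
    by (simp add: coeff_mult coeff_map_poly assms(1))
qed

lemma poly_altdef_le:
  fixes p :: "'a::comm_semiring_1 poly"
  assumes "degree p \<le> N"
  shows "poly p x = (\<Sum>i\<le>N. coeff p i * x ^ i)"
proof -
  have "(\<Sum>i\<le>degree p. coeff p i * x ^ i) = (\<Sum>i\<le>N. coeff p i * x ^ i)"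
    using assms by (intro sum.mono_neutral_left) (auto simp: coeff_eq_0)
  then show ?thesis
    by (simp add: poly_altdef)
qed

text \<open>The substitution \<open>X \<mapsto> t\<^sup>q, Y \<mapsto> t\<^bsup>q+1\<^esup>\<close> turns weights into degrees and maps the
  Hermitian polynomial to \<open>t\<^bsup>q+1\<^esup>\<close>: its two terms of top weight cancel.\<close>

definition wsubst :: "nat \<Rightarrow> 'a::comm_ring_1 bpoly \<Rightarrow> 'a poly" where
  "wsubst q p = poly (map_poly (\<lambda>c. pcompose c (monom 1 q)) p) (monom 1 (q + 1))"

lemma wsubst_add [simp]: "wsubst q (a + b) = wsubst q a + wsubst q b"
  by (simp add: wsubst_def map_poly_add_hom pcompose_add)

lemma wsubst_mult [simp]: "wsubst q (a * b) = wsubst q a * wsubst q b"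
  by (simp add: wsubst_def map_poly_mult_hom pcompose_add pcompose_mult)

lemma wsubst_minus [simp]: "wsubst q (- a) = - wsubst q a"
proof -
  have "map_poly (\<lambda>c. pcompose c (monom 1 q)) (- a) = - map_poly (\<lambda>c. pcompose c (monom 1 q)) a"
    by (rule poly_eqI) (simp add: coeff_map_poly pcompose_uminus)
  then show ?thesis
    by (simp add: wsubst_def)
qed

lemma wsubst_diff [simp]: "wsubst q (a - b) = wsubst q a - wsubst q b"
  using wsubst_add[of q a "- b"] by simp

lemma wsubst_0 [simp]: "wsubst q 0 = 0"
  by (simp add: wsubst_def)

lemma wsubst_1 [simp]: "wsubst q 1 = 1"
  by (simp add: wsubst_def pcompose_1)

lemma wsubst_power [simp]: "wsubst q (a ^ n) = wsubst q a ^ n"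
  by (induction n) simp_all

lemma wsubst_Yp: "wsubst q Yp = monom 1 (q + 1)"
  by (simp add: wsubst_def Yp_def map_poly_pCons pcompose_1)

lemma wsubst_Xp: "wsubst q Xp = monom 1 q"
  by (simp add: wsubst_def Xp_def map_poly_pCons pcompose_pCons pcompose_1)

lemma wsubst_hermH: "wsubst q (hermH q) = monom 1 (q + 1)"
proof -
  have "monom 1 (q + 1) ^ q = (monom 1 q ^ (q + 1) :: 'a::comm_ring_1 poly)"
    by (simp add: monom_power mult.commute del: power_Suc)
  then show ?thesis
    unfolding hermH_def wsubst_diff wsubst_add wsubst_power wsubst_Yp wsubst_Xp by simp
qed

lemma wsubst_explicit:
  "wsubst q p = (\<Sum>j\<le>degree p. \<Sum>i\<le>degree (coeff p j). monom (hcoeff p i j) (mdeg q i j))"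
proof -
  have pc: "pcompose c (monom 1 q) = (\<Sum>i\<le>degree c. monom (coeff c i) (i * q))" for c :: "'a poly"
    unfolding pcompose_altdef
    by (subst poly_altdef_le[OF map_poly_degree_leq])
       (simp add: coeff_map_poly monom_power smult_monom mult.commute)
  have "wsubst q p = (\<Sum>j\<le>degree p. pcompose (coeff p j) (monom 1 q) * monom 1 ((q + 1) * j))"
    unfolding wsubst_def
    by (subst poly_altdef_le[OF map_poly_degree_leq]) (simp add: coeff_map_poly monom_power)
  also have "\<dots> = (\<Sum>j\<le>degree p. \<Sum>i\<le>degree (coeff p j). monom (hcoeff p i j) (mdeg q i j))"
    by (simp add: pc sum_distrib_left mult_monom hcoeff_def mdeg_def algebra_simps)
  finally show ?thesis .
qed

lemma degree_wsubst_le: "degree (wsubst q p) \<le> wdeg q p"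
  unfolding wsubst_explicit
proof (intro degree_sum_le)
  fix j i
  show "degree (monom (hcoeff p i j) (mdeg q i j)) \<le> wdeg q p"
    by (cases "hcoeff p i j = 0") (auto intro: order.trans[OF degree_monom_le] mdeg_le_wdeg)
qed simp_all

lemma mdeg_inj:
  assumes "j < q" "j' < q" "mdeg q i j = mdeg q i' j'"
  shows "i = i' \<and> j = j'"
proof -
  have e: "mdeg q i j = j + (i + j) * q" for i j
    by (simp add: mdeg_def algebra_simps)
  have "mdeg q i j mod q = j" "mdeg q i' j' mod q = j'"
    using assms(1,2) unfolding e by simp_all
  then have "j = j'"
    using assms(3) by simp
  with assms(1,3) show ?thesis
    unfolding e by simp
qed

lemma coeff_wsubst_wdeg:
  assumes "inR q p" "p \<noteq> 0"
  shows "coeff (wsubst q p) (wdeg q p) \<noteq> 0"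
proof -
  obtain i0 j0 where top: "hcoeff p i0 j0 \<noteq> 0" "wdeg q p = mdeg q i0 j0"
    using wdeg_attained[OF assms(2)] by blast
  note bounds = hcoeff_nonzero_imp[OF top(1)]
  have column: "(\<Sum>i\<le>degree (coeff p j). if mdeg q i j = mdeg q i0 j0 then hcoeff p i j else 0) =
      (if j = j0 then hcoeff p i0 j0 else 0)" if "j \<le> degree p" for j
  proof -
    have "mdeg q i j = mdeg q i0 j0 \<longleftrightarrow> j = j0 \<and> i = i0" for i
      using mdeg_inj[of j q j0 i i0] that bounds assms(1) unfolding inR_def by auto
    then show ?thesis
      using bounds by (cases "j = j0") (simp_all add: sum.delta)
  qed
  have "coeff (wsubst q p) (wdeg q p) =
      (\<Sum>j\<le>degree p. \<Sum>i\<le>degree (coeff p j). if mdeg q i j = mdeg q i0 j0 then hcoeff p i j else 0)"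
    unfolding wsubst_explicit top(2) by (simp add: coeff_sum eq_commute)
  also have "\<dots> = hcoeff p i0 j0"
    using bounds by (simp add: column sum.delta)
  finally show ?thesis
    using top(1) by simp
qed

lemma degree_wsubst:
  assumes "inR q p" "p \<noteq> 0"
  shows "degree (wsubst q p) = wdeg q p"
  using degree_wsubst_le[of q p] le_degree[OF coeff_wsubst_wdeg[OF assms]] by simp

lemma wsubst_nonzero: "inR q p \<Longrightarrow> p \<noteq> 0 \<Longrightarrow> wsubst q p \<noteq> 0"
  using coeff_wsubst_wdeg by fastforce

text \<open>Under the weighted substitution the product of two
  nonzero reduced elements has degree equal to the sum of their weights, while the
  correction term \<open>u H\<close> of the reduction has strictly smaller degree.\<close>

lemma hred_mult_nonzero:
  fixes a b :: "'a::idom bpoly"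
  assumes q: "2 \<le> q" and R: "inR q a" "inR q b" and nz: "a \<noteq> 0" "b \<noteq> 0"
  shows "hred q (a * b) \<noteq> 0"
proof -
  obtain u where u: "inR q (a * b - u * hermH q)"
      "u = 0 \<or> wdeg q u + q * (q + 1) \<le> wdeg q (a * b)"
    using reduction_wdeg[OF q] by metis
  have red: "hred q (a * b) = a * b - u * hermH q"
    using q u(1) by (intro hred_unique) (simp_all add: heq_def)
  define A where "A = wsubst q a * wsubst q b"
  define B where "B = wsubst q u * monom 1 (q + 1)"
  have A0: "A \<noteq> 0" and deg_A: "degree A = wdeg q a + wdeg q b"
    using wsubst_nonzero[OF R(1) nz(1)] wsubst_nonzero[OF R(2) nz(2)]
      degree_wsubst[OF R(1) nz(1)] degree_wsubst[OF R(2) nz(2)]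
    by (simp_all add: A_def degree_mult_eq)
  have "degree B < degree A" if "u \<noteq> 0"
  proof -
    have "degree B \<le> wdeg q u + (q + 1)"
      unfolding B_def using degree_wsubst_le[of q u] degree_mult_le[of "wsubst q u" "monom 1 (q + 1)"]
      by (simp add: degree_monom_eq)
    also have "\<dots> < wdeg q u + q * (q + 1)"
      using mult_strict_left_mono[of 1 q "q + 1"] q by simp
    also have "\<dots> \<le> degree A"
      using u(2) that wdeg_mult[of q a b] deg_A by linarith
    finally show ?thesis .
  qed
  then have "A - B \<noteq> 0"
    using A0 by (cases "u = 0") (auto simp: B_def)
  moreover have "wsubst q (hred q (a * b)) = A - B"
    unfolding red by (simp add: A_def B_def wsubst_hermH)
  ultimately show ?thesis
    by auto
qed

text \<open>The library's \<open>finite_field_power_card_eq_same\<close> needs the sort \<open>finite_field\<close>, which a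
  type variable of sort \<open>{finite,field}\<close> does not have.\<close>

lemma finite_field_power_card:
  fixes x :: "'a::{finite,field}"
  shows "x ^ card (UNIV :: 'a set) = x"
proof (cases "x = 0")
  case False
  define U where "U = (UNIV :: 'a set) - {0}"
  have "y \<in> (*) x ` U" if "y \<in> U" for y
    using False that by (intro image_eqI[of _ _ "y / x"]) (auto simp: U_def)
  then have "finite U" "inj_on ((*) x) U" "(*) x ` U = U"
    using False by (auto simp: U_def inj_on_def)
  then have "prod id U = prod ((*) x) U"
    by (metis prod.reindex_cong id_apply)
  also have "\<dots> = x ^ card U * prod id U"
    by (simp add: prod.distrib)
  finally have "prod id U = x ^ card U * prod id U" .
  moreover have "prod id U \<noteq> 0"
    by (simp add: U_def)
  moreover have "card (UNIV :: 'a set) = Suc (card U)"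
    by (simp add: U_def card_Diff_singleton Suc_diff_1 finite_UNIV_card_ge_0)
  ultimately show ?thesis
    by simp
qed (simp add: finite_UNIV_card_ge_0)

lemma card_roots_power_plus_linear:
  assumes "2 \<le> n"
  shows "card {x :: 'a::idom. x ^ n + a * x + b = 0} \<le> n"
proof -
  define p where "p = monom 1 n + [:b, a:]"
  have "coeff p n = 1"
    using assms by (simp add: p_def coeff_pCons split: nat.split)
  then have "p \<noteq> 0"
    by auto
  moreover have "degree p \<le> n"
    using assms by (simp add: p_def degree_add_le degree_monom_le)
  moreover have "{x. x ^ n + a * x + b = 0} = {x. poly p x = 0}"
    by (auto simp: p_def poly_monom algebra_simps)
  ultimately show ?thesis
    using card_poly_roots_bound[of p] by simp
qed

text \<open>The field \<open>'a\<close> has \<open>q\<^sup>2\<close> elements; the parameter \<open>ty\<close> only fixes the type \<open>'a\<close>.\<close>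

locale hermitian_field =
  fixes q :: nat and ty :: "'a::{finite,field} itself"
  assumes q_CHAR_power: "\<exists>k>0. q = CHAR('a) ^ k"
    and card_field: "card (UNIV :: 'a set) = q ^ 2"

lemma prime_power_eq_CHAR_power:
  assumes "\<exists>p k. prime p \<and> 0 < k \<and> q = p ^ k"
    and "card (UNIV :: 'a::{finite,field} set) = q ^ 2"
  shows "\<exists>k>0. q = CHAR('a) ^ k"
proof -
  obtain p k where pk: "prime p" "0 < k" "q = p ^ k"
    using assms(1) by blast
  have "prime CHAR('a)"
    by (simp add: prime_CHAR_semidom finite_imp_CHAR_pos)
  moreover have "CHAR('a) dvd p ^ (2 * k)"
    using CHAR_dvd_CARD[where 'a='a] assms(2) pk(3) by (simp add: power_mult mult.commute)
  ultimately have "CHAR('a) = p"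
    using pk(1) by (meson prime_dvd_power primes_dvd_imp_eq)
  then show ?thesis
    using pk by blast
qed

context hermitian_field
begin

lemma prime_CHAR: "prime CHAR('a)"
  by (simp add: prime_CHAR_semidom finite_imp_CHAR_pos)

lemma q_ge_2: "2 \<le> q"
proof -
  obtain k where "k > 0" "q = CHAR('a) ^ k"
    using q_CHAR_power by blast
  then have "CHAR('a) \<le> q"
    using self_le_power[of "CHAR('a)" k] prime_ge_2_nat[OF prime_CHAR] by simp
  then show ?thesis
    using prime_ge_2_nat[OF prime_CHAR] by simp
qed

lemma of_nat_q: "(of_nat q :: 'a) = 0"
  using q_CHAR_power by (auto simp: of_nat_eq_0_iff_char_dvd)

lemma frobenius_add:
  fixes x y :: "'b::comm_semiring_1"
  assumes "CHAR('b) = CHAR('a)"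
  shows "(x + y) ^ q = x ^ q + y ^ q"
  using q_CHAR_power prime_CHAR assms by (metis freshmans_dream')

lemma frobenius_diff:
  fixes x y :: "'b::comm_ring_1"
  assumes "CHAR('b) = CHAR('a)"
  shows "(x - y) ^ q = x ^ q - y ^ q"
  using frobenius_add[OF assms, of "x - y" y] by (simp add: algebra_simps)

lemma power_q_squared: "(x :: 'a) ^ (q ^ 2) = x"
  using finite_field_power_card[of x] card_field by simp

lemma norm_in_subfield: "((a :: 'a) ^ (q + 1)) ^ q = a ^ (q + 1)"
proof -
  have "(a ^ (q + 1)) ^ q = a ^ (q * q) * a ^ q"
    by (simp add: power_mult [symmetric] power_add algebra_simps)
  also have "a ^ (q * q) = a"
    using power_q_squared[of a] by (simp add: power2_eq_square)
  finally show ?thesis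
    by simp
qed

lemma trace_add: "((x :: 'a) + y) ^ q + (x + y) = (x ^ q + x) + (y ^ q + y)"
  by (simp add: frobenius_add algebra_simps)

lemma trace_diff: "((x :: 'a) - y) ^ q + (x - y) = (x ^ q + x) - (y ^ q + y)"
  by (simp add: frobenius_diff)

lemma trace_fiber_eq:
  "{b :: 'a. b ^ q + b = b0 ^ q + b0} = (\<lambda>\<beta>. \<beta> + b0) ` {\<beta>. \<beta> ^ q + \<beta> = 0}"
proof (intro equalityI subsetI)
  fix b
  assume "b \<in> {b. b ^ q + b = b0 ^ q + b0}"
  then have "(b - b0) ^ q + (b - b0) = 0"
    by (simp add: trace_diff)
  then show "b \<in> (\<lambda>\<beta>. \<beta> + b0) ` {\<beta>. \<beta> ^ q + \<beta> = 0}"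
    by (intro image_eqI[of _ _ "b - b0"]) simp_all
next
  fix b
  assume "b \<in> (\<lambda>\<beta>. \<beta> + b0) ` {\<beta>. \<beta> ^ q + \<beta> = 0}"
  then obtain \<beta> where "\<beta> ^ q + \<beta> = 0" "b = \<beta> + b0"
    by blast
  then show "b \<in> {b. b ^ q + b = b0 ^ q + b0}"
    by (simp add: frobenius_add algebra_simps)
qed

text \<open>The trace \<open>b \<mapsto> b\<^sup>q + b\<close> onto the subfield \<open>{c. c\<^sup>q = c}\<close>: its kernel and image have at most
  \<open>q\<close> elements each, and their product is the field size \<open>q\<^sup>2\<close>.\<close>

lemma trace_kernel_image:
  shows card_trace_kernel: "card {\<beta> :: 'a. \<beta> ^ q + \<beta> = 0} = q"
    and range_trace: "range (\<lambda>b :: 'a. b ^ q + b) = {c. c ^ q = c}"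
proof -
  define T where "T b = b ^ q + b" for b :: 'a
  define K where "K = {\<beta>. T \<beta> = 0}"
  have fiber: "{b. T b = T b0} = (\<lambda>\<beta>. \<beta> + b0) ` K" for b0
    unfolding K_def T_def by (rule trace_fiber_eq)
  have "card (\<Union>c\<in>range T. {b. T b = c}) = (\<Sum>c\<in>range T. card {b. T b = c})"
    by (rule card_UN_disjoint) auto
  moreover have "(\<Union>c\<in>range T. {b. T b = c}) = UNIV"
    by auto
  ultimately have "card (UNIV :: 'a set) = (\<Sum>c\<in>range T. card {b. T b = c})"
    by simp
  also have "\<dots> = (\<Sum>c\<in>range T. card K)"
  proof (rule sum.cong [OF refl])
    fix c
    assume "c \<in> range T"
    then obtain b0 where "c = T b0"
      by blast
    then show "card {b. T b = c} = card K"
      using fiber[of b0] by (simp add: card_image)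
  qed
  also have "\<dots> = card (range T) * card K"
    by simp
  finally have prod: "card (range T) * card K = q * q"
    by (simp add: card_field power2_eq_square)
  have image: "range T \<subseteq> {c. c ^ q = c}"
    using power_q_squared by (auto simp: T_def frobenius_add power2_eq_square power_mult [symmetric])
  have "card {c :: 'a. c ^ q = c} \<le> q"
    using card_roots_power_plus_linear[OF q_ge_2, of "-1" 0] by (simp add: algebra_simps)
  then have le1: "card (range T) \<le> q" and le2: "card K \<le> q"
    using card_mono[OF _ image] card_roots_power_plus_linear[OF q_ge_2, of 1 0]
    by (auto simp: K_def T_def)
  have "q * q \<le> card (range T) * q" "q * q \<le> q * card K"
    using mult_le_mono2[OF le2, of "card (range T)"] mult_le_mono1[OF le1, of "card K"] prod
    by simp_all
  then have "card (range T) = q" "card K = q"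
    using le1 le2 q_ge_2 by simp_all
  then have "range T = {c. c ^ q = c}"
    using \<open>card {c :: 'a. c ^ q = c} \<le> q\<close> by (intro card_seteq[OF _ image]) simp_all
  with \<open>card K = q\<close> show "card {\<beta> :: 'a. \<beta> ^ q + \<beta> = 0} = q"
    "range (\<lambda>b :: 'a. b ^ q + b) = {c. c ^ q = c}"
    by (simp_all add: K_def T_def)
qed

lemma card_trace_fiber:
  assumes "(c :: 'a) ^ q = c"
  shows "card {b. b ^ q + b = c} = q"
proof -
  obtain b0 where b0: "c = b0 ^ q + b0"
    using assms range_trace by blast
  then show ?thesis
    unfolding b0 trace_fiber_eq
    by (simp add: card_image card_trace_kernel)
qed

lemma card_points_above: "card {b :: 'a. (a, b) \<in> hpts q} = q"
  using card_trace_fiber[OF norm_in_subfield[of a]] by (simp add: hpts_def)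

end

section \<open>Vanishing to a given order at a rational point\<close>

definition x_minus :: "'a::comm_ring_1 \<Rightarrow> 'a bpoly" where
  "x_minus a = Xp - [:[:a:]:]"

definition y_minus :: "'a::comm_ring_1 \<Rightarrow> 'a bpoly" where
  "y_minus b = Yp - [:[:b:]:]"

lemma x_minus_altdef: "x_minus a = [:[:-a, 1:]:]"
  by (simp add: x_minus_def Xp_def)

lemma y_minus_altdef: "y_minus b = [:[:-b:], 1:]"
  by (simp add: y_minus_def Yp_def)

lemma evalH_x_minus [simp]: "evalH (x_minus a) P = fst P - a"
  by (simp add: x_minus_def)

lemma evalH_y_minus [simp]: "evalH (y_minus b) P = snd P - b"
  by (simp add: y_minus_def)

lemma x_minus_nonzero [simp]: "x_minus a \<noteq> 0"
  by (simp add: x_minus_altdef)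

text \<open>\<open>vanishes_to q P n F\<close> says that \<open>F\<close> lies in \<open>(X - a)\<^sup>n O\<^sub>P\<close>, where \<open>O\<^sub>P\<close> is the local ring
  of the curve at \<open>P = (a, b)\<close>.  As \<open>X - a\<close> is a local parameter at every affine point, this is
  the condition \<open>v\<^sub>P(F) \<ge> n\<close> (lemma \<open>val_ge_iff_vanishes_to\<close>).\<close>

definition vanishes_to :: "nat \<Rightarrow> 'a::idom \<times> 'a \<Rightarrow> nat \<Rightarrow> 'a bpoly \<Rightarrow> bool" where
  "vanishes_to q P n F \<longleftrightarrow> (\<exists>g a'. evalH g P \<noteq> 0 \<and> heq q (g * F) (x_minus (fst P) ^ n * a'))"

lemma vanishes_toI:
  "evalH g P \<noteq> 0 \<Longrightarrow> heq q (g * F) (x_minus (fst P) ^ n * a') \<Longrightarrow> vanishes_to q P n F"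
  unfolding vanishes_to_def by blast

lemma vanishes_to_0 [simp]: "vanishes_to q P 0 F"
  by (rule vanishes_toI[of 1 _ _ _ _ F]) simp_all

lemma vanishes_to_heq: "vanishes_to q P n F \<Longrightarrow> heq q F F' \<Longrightarrow> vanishes_to q P n F'"
  unfolding vanishes_to_def by (meson heq_mult_left heq_sym heq_trans)

lemma vanishes_to_mult:
  assumes "vanishes_to q P n F1" "vanishes_to q P m F2"
  shows "vanishes_to q P (n + m) (F1 * F2)"
proof -
  obtain g1 a1 g2 a2 where g: "evalH g1 P \<noteq> 0" "heq q (g1 * F1) (x_minus (fst P) ^ n * a1)"
    "evalH g2 P \<noteq> 0" "heq q (g2 * F2) (x_minus (fst P) ^ m * a2)"
    using assms unfolding vanishes_to_def by blast
  have "heq q ((g1 * F1) * (g2 * F2)) ((x_minus (fst P) ^ n * a1) * (x_minus (fst P) ^ m * a2))"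
    using g(2,4) by (rule heq_mult)
  then have "heq q ((g1 * g2) * (F1 * F2)) (x_minus (fst P) ^ (n + m) * (a1 * a2))"
    by (simp add: algebra_simps power_add)
  with g(1,3) show ?thesis
    by (intro vanishes_toI[of "g1 * g2"]) simp_all
qed

lemma vanishes_to_mult_right: "vanishes_to q P n F \<Longrightarrow> vanishes_to q P n (F * B)"
  using vanishes_to_mult[of q P n F 0 B] by simp

lemma vanishes_to_mult_left: "vanishes_to q P n F \<Longrightarrow> vanishes_to q P n (B * F)"
  using vanishes_to_mult_right by (metis mult.commute)

lemma vanishes_to_add:
  assumes "vanishes_to q P n F1" "vanishes_to q P n F2"
  shows "vanishes_to q P n (F1 + F2)"
proof -
  obtain g1 a1 g2 a2 where g: "evalH g1 P \<noteq> 0" "heq q (g1 * F1) (x_minus (fst P) ^ n * a1)"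
    "evalH g2 P \<noteq> 0" "heq q (g2 * F2) (x_minus (fst P) ^ n * a2)"
    using assms unfolding vanishes_to_def by blast
  have "heq q (g2 * (g1 * F1) + g1 * (g2 * F2))
      (g2 * (x_minus (fst P) ^ n * a1) + g1 * (x_minus (fst P) ^ n * a2))"
    using g(2,4) by (intro heq_add heq_mult_left)
  then have "heq q ((g1 * g2) * (F1 + F2)) (x_minus (fst P) ^ n * (g2 * a1 + g1 * a2))"
    by (simp add: algebra_simps)
  with g(1,3) show ?thesis
    by (intro vanishes_toI[of "g1 * g2"]) simp_all
qed

lemma vanishes_to_mono: "m \<le> n \<Longrightarrow> vanishes_to q P n F \<Longrightarrow> vanishes_to q P m F"
  unfolding vanishes_to_def
  by (metis (no_types, lifting) le_add_diff_inverse mult.assoc power_add)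

lemma vanishes_to_prod:
  "finite A \<Longrightarrow> (\<And>x. x \<in> A \<Longrightarrow> vanishes_to q P (n x) (f x)) \<Longrightarrow>
    vanishes_to q P (\<Sum>x\<in>A. n x) (\<Prod>x\<in>A. f x)"
  by (induction A rule: finite_induct) (simp_all add: vanishes_to_mult)

lemma vanishes_to_power: "vanishes_to q P n F \<Longrightarrow> vanishes_to q P (k * n) (F ^ k)"
  by (induction k) (simp_all add: vanishes_to_mult)

lemma evalH_eq_0_if_vanishes_to:
  assumes "vanishes_to q P (Suc n) F" "P \<in> hpts q"
  shows "evalH F P = 0"
proof -
  obtain g a' where g: "evalH g P \<noteq> 0" "heq q (g * F) (x_minus (fst P) ^ Suc n * a')"
    using assms(1) unfolding vanishes_to_def by blast
  then show ?thesis
    using heq_evalH[OF g(2) assms(2)] by simp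
qed

lemma vanishes_to_cancel_unit:
  assumes "evalH w P \<noteq> 0" "vanishes_to q P n (w * F)"
  shows "vanishes_to q P n F"
proof -
  obtain g a' where g: "evalH g P \<noteq> 0" "heq q (g * (w * F)) (x_minus (fst P) ^ n * a')"
    using assms(2) unfolding vanishes_to_def by blast
  with assms(1) show ?thesis
    by (intro vanishes_toI[of "g * w"]) (simp_all add: mult.assoc)
qed

definition specX :: "'a::comm_ring_1 \<Rightarrow> 'a bpoly \<Rightarrow> 'a poly" where
  "specX a p = map_poly (\<lambda>c. poly c a) p"

lemma specX_mult [simp]: "specX a (p * r) = specX a p * specX a r"
  unfolding specX_def by (rule map_poly_mult_hom) simp_all

lemma coeff_specX: "coeff (specX a p) n = poly (coeff p n) a"
  by (simp add: specX_def coeff_map_poly)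

lemma x_minus_dvd_iff:
  fixes p :: "'a::field bpoly"
  shows "x_minus a dvd p \<longleftrightarrow> specX a p = 0"
proof
  assume "x_minus a dvd p"
  then obtain r where "p = x_minus a * r"
    by blast
  moreover have "specX a (x_minus a) = 0"
    by (simp add: specX_def x_minus_altdef map_poly_pCons)
  ultimately show "specX a p = 0"
    by simp
next
  assume "specX a p = 0"
  then have "[:-a, 1:] dvd coeff p n" for n
    using coeff_specX[of a p n] by (simp add: poly_eq_0_iff_dvd)
  define r where "r = map_poly (\<lambda>c. c div [:-a, 1:]) p"
  have "x_minus a * r = smult [:-a, 1:] r"
    by (simp add: x_minus_altdef)
  then have "coeff (x_minus a * r) n = [:-a, 1:] * (coeff p n div [:-a, 1:])" for n
    by (simp only: coeff_smult r_def coeff_map_poly div_0)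
  also have "[:-a, 1:] * (coeff p n div [:-a, 1:]) = coeff p n" for n
    using \<open>\<And>n. [:-a, 1:] dvd coeff p n\<close> by (rule dvd_mult_div_cancel)
  finally have "p = x_minus a * r"
    by (intro poly_eqI) simp
  then show "x_minus a dvd p"
    by (rule dvdI)
qed

lemma vanishes_to_cancel_x_minus:
  fixes F :: "'a::field bpoly"
  assumes q: "2 \<le> q" and van: "vanishes_to q P (Suc n) (x_minus (fst P) * F)"
  shows "vanishes_to q P n F"
proof -
  define x where "x = x_minus (fst P)"
  obtain g a' u where g: "evalH g P \<noteq> 0" and u: "g * (x * F) = x ^ Suc n * a' + u * hermH q"
    using van unfolding vanishes_to_def heq_iff x_def by blast
  have "u * hermH q = x * (g * F - x ^ n * a')"
    using u by (simp add: algebra_simps)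
  then have "specX (fst P) u * specX (fst P) (hermH q) = 0"
    unfolding x_def by (metis dvd_triv_left specX_mult x_minus_dvd_iff)
  moreover have "coeff (specX (fst P) (hermH q)) q = 1"
    using q by (simp add: coeff_specX coeff_hermH)
  ultimately have "x dvd u"
    unfolding x_def x_minus_dvd_iff by auto
  then obtain u' where "u = x * u'"
    by blast
  with u have "x * (g * F) = x * (x ^ n * a' + u' * hermH q)"
    by (simp add: algebra_simps)
  then have "heq q (g * F) (x ^ n * a')"
    unfolding heq_iff x_def by simp
  with g show ?thesis
    unfolding x_def by (rule vanishes_toI)
qed

lemma vanishing_decomp:
  fixes F :: "'a::idom bpoly"
  assumes "evalH F (a, b) = 0"
  obtains A B where "F = x_minus a * [:A:] + y_minus b * B"
proof -
  have F: "F = y_minus b * synthetic_div F [:b:] + [:poly F [:b:]:]"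
    using synthetic_div_correct'[where p = F and c = "[:b:]"] by (simp add: y_minus_altdef algebra_simps)
  have "poly (poly F [:b:]) a = 0"
    using assms by (simp add: evalH_altdef)
  then obtain e where "poly F [:b:] = [:-a, 1:] * e"
    by (metis dvdE poly_eq_0_iff_dvd)
  with F show ?thesis
    by (intro that[of e "synthetic_div F [:b:]"]) (simp add: x_minus_altdef algebra_simps)
qed

context hermitian_field
begin

text \<open>On the curve \<open>(Y - b)(1 + (Y - b)\<^bsup>q-1\<^esup>) = Y\<^sup>q + Y - (b\<^sup>q + b) = X\<^bsup>q+1\<^esup> - a\<^bsup>q+1\<^esup>\<close>, which is a
  multiple of \<open>X - a\<close>, and the second factor is a unit at \<open>(a, b)\<close>.\<close>

lemma y_minus_mult_x_minus:
  assumes "(a, b :: 'a) \<in> hpts q"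
  obtains w where "heq q (y_minus b * (1 + y_minus b ^ (q - 1))) (x_minus a * w)"
proof -
  have "y_minus b * (1 + y_minus b ^ (q - 1)) = y_minus b + y_minus b ^ q"
    using q_ge_2 by (simp add: algebra_simps power_Suc [symmetric] del: power_Suc)
  also have "\<dots> = (Yp ^ q + Yp) - ([:[:b ^ q:]:] + [:[:b:]:])"
    using frobenius_diff[where x = "Yp :: 'a bpoly" and y = "[:[:b:]:]"]
    by (simp add: y_minus_def poly_const_pow)
  also have "[:[:b ^ q:]:] + [:[:b:]:] = [:[:a ^ (q + 1):]:]"
    using assms by (simp add: hpts_def)
  finally have "y_minus b * (1 + y_minus b ^ (q - 1)) = hermH q + (Xp ^ (q + 1) - [:[:a ^ (q + 1):]:])"
    by (simp add: hermH_def)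
  moreover have "poly ([:0, 1:] ^ (q + 1) - [:a ^ (q + 1):]) a = 0"
    by simp
  then obtain W where "[:0, 1:] ^ (q + 1) - [:a ^ (q + 1):] = [:-a, 1:] * W"
    by (metis dvdE poly_eq_0_iff_dvd)
  then have "Xp ^ (q + 1) - [:[:a ^ (q + 1):]:] = x_minus a * [:W:]"
    by (simp add: Xp_def x_minus_altdef poly_const_pow)
  ultimately show ?thesis
    by (intro that[of "[:W:]"]) (simp add: heq_def)
qed

lemma vanishes_to_SucI:
  fixes P :: "'a \<times> 'a"
  assumes P: "P \<in> hpts q" and g: "evalH g P \<noteq> 0" "heq q (g * F) (x_minus (fst P) ^ n * a')"
    and a': "evalH a' P = 0"
  shows "vanishes_to q P (Suc n) F"
proof -
  obtain a b where ab: "P = (a, b)"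
    by fastforce
  define c where "c = 1 + y_minus b ^ (q - 1)"
  obtain w where w: "heq q (y_minus b * c) (x_minus a * w)"
    using y_minus_mult_x_minus[of a b] P unfolding ab c_def by blast
  obtain A B where AB: "a' = x_minus a * [:A:] + y_minus b * B"
    using vanishing_decomp a' ab by blast
  have "heq q (c * (g * F)) (c * (x_minus a ^ n * a'))"
    using g(2) ab by (simp add: heq_mult_left)
  also have "c * (x_minus a ^ n * a') = x_minus a ^ n * (x_minus a * (c * [:A:]) + (y_minus b * c) * B)"
    by (simp add: AB algebra_simps)
  also have "heq q \<dots> (x_minus a ^ n * (x_minus a * (c * [:A:]) + (x_minus a * w) * B))"
    using heq_mult_left[OF heq_add[OF heq_refl heq_mult[OF w heq_refl]]] .
  also have "\<dots> = x_minus a ^ Suc n * (c * [:A:] + w * B)"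
    by (simp add: algebra_simps)
  finally have "heq q ((c * g) * F) (x_minus a ^ Suc n * (c * [:A:] + w * B))"
    by (simp add: mult.assoc)
  moreover have "evalH (c * g) P \<noteq> 0"
    using g(1) q_ge_2 ab by (simp add: c_def zero_power)
  ultimately show ?thesis
    using ab by (intro vanishes_toI) simp_all
qed

end

lemma vanishes_to_const_imp_dvd:
  fixes c :: "'a::field poly"
  assumes q: "2 \<le> q" and P: "P \<in> hpts q" and van: "vanishes_to q P n [:c:]"
  shows "[:-fst P, 1:] ^ n dvd c"
  using van
proof (induction n arbitrary: c)
  case (Suc n)
  have "poly c (fst P) = 0"
    using evalH_eq_0_if_vanishes_to[OF Suc.prems P] by simp
  then obtain c' where c': "c = [:-fst P, 1:] * c'"
    by (metis dvdE poly_eq_0_iff_dvd)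
  then have "vanishes_to q P (Suc n) (x_minus (fst P) * [:c':])"
    using Suc.prems by (simp add: x_minus_altdef)
  then have "[:-fst P, 1:] ^ n dvd c'"
    by (rule Suc.IH[OF vanishes_to_cancel_x_minus[OF q]])
  then show ?case
    unfolding c' power_Suc by (rule mult_dvd_mono[OF dvd_refl])
qed simp

lemma val_ge_if_vanishes_to:
  fixes F :: "'a::idom bpoly"
  assumes "vanishes_to q P s F"
  shows "val_ge q P s F"
proof -
  obtain g a' u where g: "evalH g P \<noteq> 0" "g * F = x_minus (fst P) ^ s * a' + u * hermH q"
    using assms unfolding vanishes_to_def heq_iff by blast
  have "(\<Sum>k\<le>s. (if k = s then a' else 0) * x_minus (fst P) ^ k * y_minus (snd P) ^ (s - k)) =
      (\<Sum>k\<le>s. if k = s then x_minus (fst P) ^ s * a' else 0)"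
    by (intro sum.cong) (simp_all add: mult.commute)
  also have "\<dots> = x_minus (fst P) ^ s * a'"
    by simp
  finally have "g * F = (\<Sum>k\<le>s. (if k = s then a' else 0) * x_minus (fst P) ^ k *
      y_minus (snd P) ^ (s - k)) + u * hermH q"
    using g(2) by simp
  with g(1) show ?thesis
    unfolding val_ge_def x_minus_def [symmetric] y_minus_def [symmetric] by (intro exI conjI)
qed

context hermitian_field
begin

lemma vanishes_to_1I:
  fixes P :: "'a \<times> 'a"
  assumes "P \<in> hpts q" "evalH F P = 0"
  shows "vanishes_to q P 1 F"
  using vanishes_to_SucI[OF assms(1), of 1 F 0 F] assms(2) by simp

text \<open>Multiplying by a power of the unit \<open>1 + (Y - b)\<^bsup>q-1\<^esup>\<close> turns every monomial
  \<open>(X - a)\<^sup>k (Y - b)\<^bsup>s-k\<^esup>\<close> of the definition of \<open>val_ge\<close> into a multiple of \<open>(X - a)\<^sup>s\<close>.\<close>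

lemma vanishes_to_if_val_ge:
  fixes P :: "'a \<times> 'a"
  assumes P: "P \<in> hpts q" and val: "val_ge q P s F"
  shows "vanishes_to q P s F"
proof -
  obtain g c u where g: "evalH g P \<noteq> 0"
    and gF: "g * F = (\<Sum>k\<le>s. c k * x_minus (fst P) ^ k * y_minus (snd P) ^ (s - k)) + u * hermH q"
    using val unfolding val_ge_def x_minus_def y_minus_def by blast
  obtain a b where ab: "P = (a, b)"
    by fastforce
  define U where "U = 1 + y_minus b ^ (q - 1)"
  obtain w where w: "heq q (y_minus b * U) (x_minus a * w)"
    using y_minus_mult_x_minus P unfolding ab U_def by blast
  have monomial_heq: "heq q (U ^ s * (c k * x_minus a ^ k * y_minus b ^ (s - k)))
      (x_minus a ^ s * (c k * w ^ (s - k) * U ^ k))" if "k \<le> s" for k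
  proof -
    have "U ^ s = U ^ k * U ^ (s - k)" "x_minus a ^ s = x_minus a ^ k * x_minus a ^ (s - k)"
      using that by (simp_all flip: power_add)
    then have "U ^ s * (c k * x_minus a ^ k * y_minus b ^ (s - k)) =
        c k * x_minus a ^ k * U ^ k * (y_minus b * U) ^ (s - k)"
      by (simp add: power_mult_distrib mult_ac)
    also have "heq q \<dots> (c k * x_minus a ^ k * U ^ k * (x_minus a * w) ^ (s - k))"
      by (intro heq_mult_left heq_power w)
    also have "c k * x_minus a ^ k * U ^ k * (x_minus a * w) ^ (s - k) =
        x_minus a ^ s * (c k * w ^ (s - k) * U ^ k)"
      using \<open>x_minus a ^ s = x_minus a ^ k * x_minus a ^ (s - k)\<close>
      by (simp add: power_mult_distrib mult_ac)
    finally show ?thesis .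
  qed
  have "heq q (g * F) (\<Sum>k\<le>s. c k * x_minus a ^ k * y_minus b ^ (s - k))"
    unfolding gF ab by (simp add: heq_def)
  then have "heq q (U ^ s * (g * F)) (U ^ s * (\<Sum>k\<le>s. c k * x_minus a ^ k * y_minus b ^ (s - k)))"
    by (rule heq_mult_left)
  also have "heq q \<dots> (\<Sum>k\<le>s. x_minus a ^ s * (c k * w ^ (s - k) * U ^ k))"
    unfolding sum_distrib_left by (intro heq_sum monomial_heq) simp
  finally have "heq q ((U ^ s * g) * F) (x_minus a ^ s * (\<Sum>k\<le>s. c k * w ^ (s - k) * U ^ k))"
    by (simp add: sum_distrib_left mult.assoc)
  moreover have "evalH (U ^ s * g) P \<noteq> 0"
    using g q_ge_2 ab by (simp add: U_def zero_power)
  ultimately show ?thesis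
    using ab by (intro vanishes_toI) simp_all
qed

lemma val_ge_iff_vanishes_to:
  fixes P :: "'a \<times> 'a"
  shows "P \<in> hpts q \<Longrightarrow> val_ge q P s F \<longleftrightarrow> vanishes_to q P s F"
  using vanishes_to_if_val_ge val_ge_if_vanishes_to by blast

end

section \<open>Functions vanishing at all rational points\<close>

definition Gx :: "nat \<Rightarrow> 'a::comm_ring_1 poly" where
  "Gx q = [:0, 1:] ^ (q ^ 2) - [:0, 1:]"

lemma Gp_Gx: "Gp q = [:Gx q:]"
  by (simp add: Gp_def Gx_def Xp_def poly_const_pow)

lemma Gx_monom: "2 \<le> q \<Longrightarrow> Gx q = monom 1 (q ^ 2) + [:0, -1:]"
  by (simp add: Gx_def monom_altdef)

lemma degree_Gx: "2 \<le> q \<Longrightarrow> degree (Gx q :: 'a::comm_ring_1 poly) = q ^ 2"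
proof -
  assume q: "2 \<le> q"
  then have "2 ^ 2 \<le> q ^ 2"
    by (rule power_mono) simp
  then have "1 < q ^ 2"
    by simp
  then show ?thesis
    using q by (simp add: Gx_monom degree_add_eq_left degree_monom_eq)
qed

lemma Gx_nonzero:
  assumes "2 \<le> q"
  shows "(Gx q :: 'a::comm_ring_1 poly) \<noteq> 0"
proof
  assume "Gx q = (0 :: 'a poly)"
  then show False
    using degree_Gx[OF assms, where 'a='a] assms by simp
qed

context hermitian_field
begin

lemma poly_Gx [simp]: "poly (Gx q) (a :: 'a) = 0"
  using power_q_squared[of a] by (simp add: Gx_def)

lemma Gx_dvd_if_vanishes:
  fixes c :: "'a poly"
  assumes "\<And>a. poly c a = 0"
  shows "Gx q dvd c"
proof -
  have "poly (c mod Gx q) a = 0" for a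
  proof -
    have "poly c a = poly (c div Gx q) a * poly (Gx q) a + poly (c mod Gx q) a"
      by (subst div_mult_mod_eq[symmetric, of c "Gx q"]) (simp only: poly_add poly_mult)
    then show ?thesis
      using assms[of a] by simp
  qed
  have "c mod Gx q = 0"
  proof (rule ccontr)
    assume ne: "c mod Gx q \<noteq> 0"
    have "q ^ 2 = card {x. poly (c mod Gx q) x = 0}"
      using \<open>\<And>a. poly (c mod Gx q) a = 0\<close> card_field by simp
    also have "\<dots> \<le> degree (c mod Gx q)"
      by (rule card_poly_roots_bound[OF ne])
    also have "\<dots> < q ^ 2"
      using degree_mod_less'[OF Gx_nonzero[OF q_ge_2] ne] degree_Gx[OF q_ge_2, where 'a='a] by simp
    finally show False
      by simp
  qed
  then show ?thesis
    by (simp add: mod_eq_0_iff_dvd)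
qed

text \<open>A reduced element vanishing at all \<open>q\<^sup>3\<close> points vanishes at the \<open>q\<close> points above each
  abscissa, more than its \<open>Y\<close>-degree allows; so it vanishes identically in \<open>Y\<close> over every
  \<open>a \<in> \<bbbF>\<^bsub>q\<^sup>2\<^esub>\<close>, i.e. its coefficients are divisible by \<open>X\<^bsup>q\<^sup>2\<^esup> - X\<close>.\<close>

lemma Gp_dvd_if_vanishes:
  fixes F :: "'a bpoly"
  assumes zero: "\<And>P. P \<in> hpts q \<Longrightarrow> evalH F P = 0"
  obtains F1 where "heq q F (Gp q * F1)"
proof -
  define r where "r = hred q F"
  have Fr: "heq q F r" and deg_r: "degree r < q"
    using heq_hred[OF q_ge_2] inR_hred[OF q_ge_2] unfolding r_def inR_def by blast+
  have "specX a r = 0" for a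
  proof (rule ccontr)
    assume ne: "specX a r \<noteq> 0"
    have "{b. (a, b) \<in> hpts q} \<subseteq> {b. poly (specX a r) b = 0}"
      using zero heq_evalH[OF Fr] by (auto simp: evalH_def specX_def)
    then have "card {b. (a, b) \<in> hpts q} \<le> card {b. poly (specX a r) b = 0}"
      by (rule card_mono[OF poly_roots_finite[OF ne]])
    then have "q \<le> card {b. poly (specX a r) b = 0}"
      by (simp only: card_points_above)
    also have "\<dots> \<le> degree (specX a r)"
      by (rule card_poly_roots_bound[OF ne])
    also have "\<dots> \<le> degree r"
      unfolding specX_def by (rule map_poly_degree_leq)
    finally show False
      using deg_r by simp
  qed
  then have dvd: "Gx q dvd coeff r j" for j
    using coeff_specX[of _ r j] by (intro Gx_dvd_if_vanishes) simp
  define F1 where "F1 = map_poly (\<lambda>c. c div Gx q) r"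
  have "r = Gp q * F1"
    by (intro poly_eqI) (simp add: F1_def Gp_Gx coeff_map_poly dvd)
  with Fr show ?thesis
    by (intro that[of F1]) simp
qed

text \<open>\<open>G\<close> has simple roots (its derivative is \<open>-1\<close>), so it contains \<open>X - a\<close> exactly once.\<close>

lemma Gp_factor:
  obtains W where "Gp q = x_minus a * [:W:]" "poly W (a :: 'a) \<noteq> 0"
proof -
  obtain W where W: "Gx q = [:-a, 1:] * W"
    using poly_Gx[of a] by (metis dvdE poly_eq_0_iff_dvd)
  have "(of_nat (q ^ 2) :: 'a) = 0"
    using of_nat_q by simp
  then have "pderiv ([:0, 1:] ^ (q ^ 2) :: 'a poly) = 0"
    by (simp add: pderiv_power)
  then have "pderiv (Gx q :: 'a poly) = [:-1:]"
    by (simp add: Gx_def pderiv_diff pderiv_pCons)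
  moreover have "pderiv (Gx q) = [:-a, 1:] * pderiv W + W"
    unfolding W by (subst pderiv_mult) (simp add: pderiv_pCons)
  ultimately have "[:-a, 1:] * pderiv W + W = [:-1:]"
    by (metis)
  then have "poly ([:-a, 1:] * pderiv W + W) a = poly [:-1:] a"
    by (rule arg_cong)
  then have "poly W a = - 1"
    by simp
  then show ?thesis
    using W by (intro that[of W]) (simp_all add: Gp_Gx x_minus_altdef)
qed

lemma Gp_power_dvd_if_vanishes_to:
  fixes F :: "'a bpoly"
  assumes "\<And>P. P \<in> hpts q \<Longrightarrow> vanishes_to q P n F"
  obtains t where "heq q F (Gp q ^ n * t)"
  using assms
proof (induction n arbitrary: F thesis)
  case 0
  show ?case
    by (rule "0.prems"(1)[of F]) simp
next
  case (Suc n)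
  have "evalH F P = 0" if "P \<in> hpts q" for P
    using evalH_eq_0_if_vanishes_to[OF Suc.prems(2)[OF that] that] .
  then obtain F1 where F1: "heq q F (Gp q * F1)"
    by (rule Gp_dvd_if_vanishes)
  have "vanishes_to q P n F1" if P: "P \<in> hpts q" for P
  proof -
    obtain W where W: "Gp q = x_minus (fst P) * [:W:]" "poly W (fst P) \<noteq> 0"
      by (rule Gp_factor)
    have "vanishes_to q P (Suc n) (x_minus (fst P) * ([:W:] * F1))"
      using vanishes_to_heq[OF Suc.prems(2)[OF P] F1] W(1) by (simp add: mult.assoc)
    then have "vanishes_to q P n ([:W:] * F1)"
      by (rule vanishes_to_cancel_x_minus[OF q_ge_2])
    moreover have "evalH [:W:] P \<noteq> 0"
      using W(2) by simp
    ultimately show ?thesis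
      by (rule vanishes_to_cancel_unit[rotated])
  qed
  then obtain t where "heq q F1 (Gp q ^ n * t)"
    by (rule Suc.IH[rotated])
  with F1 have "heq q F (Gp q * (Gp q ^ n * t))"
    using heq_trans[OF F1 heq_mult_left] by blast
  then show ?case
    by (intro Suc.prems(1)[of t]) (simp add: mult.assoc)
qed

end

section \<open>The lower bound\<close>

definition shiftY :: "'a::comm_ring_1 \<Rightarrow> 'a bpoly \<Rightarrow> 'a bpoly" where
  "shiftY \<beta> p = pcompose p [:[:\<beta>:], 1:]"

lemma shiftY_add [simp]: "shiftY \<beta> (a + b) = shiftY \<beta> a + shiftY \<beta> b"
  by (simp add: shiftY_def pcompose_add)

lemma shiftY_mult [simp]: "shiftY \<beta> (a * b) = shiftY \<beta> a * shiftY \<beta> b"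
  by (simp add: shiftY_def pcompose_mult)

lemma shiftY_diff [simp]: "shiftY \<beta> (a - b) = shiftY \<beta> a - shiftY \<beta> b"
  by (simp add: shiftY_def pcompose_diff)

lemma shiftY_1 [simp]: "shiftY \<beta> 1 = 1"
  by (simp add: shiftY_def pcompose_1)

lemma shiftY_power [simp]: "shiftY \<beta> (a ^ n) = shiftY \<beta> a ^ n"
  by (induction n) simp_all

lemma shiftY_prod: "shiftY \<beta> (prod f A) = (\<Prod>x\<in>A. shiftY \<beta> (f x))"
  by (simp add: shiftY_def pcompose_prod)

lemma shiftY_const [simp]: "shiftY \<beta> [:c:] = [:c:]"
  by (simp add: shiftY_def)

lemma shiftY_x_minus [simp]: "shiftY \<beta> (x_minus a) = x_minus a"
  by (simp add: x_minus_altdef)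

lemma shiftY_Xp [simp]: "shiftY \<beta> Xp = Xp"
  by (simp add: Xp_def)

lemma shiftY_Yp: "shiftY \<beta> Yp = Yp + [:[:\<beta>:]:]"
  by (simp add: shiftY_def Yp_def pcompose_pCons)

lemma shiftY_shiftY: "shiftY \<gamma> (shiftY \<beta> p) = shiftY (\<beta> + \<gamma>) p"
  by (simp add: shiftY_def pcompose_assoc [symmetric] pcompose_pCons)

lemma evalH_shiftY: "evalH (shiftY \<beta> p) (a, b) = evalH p (a, b + \<beta>)"
  by (simp add: evalH_altdef shiftY_def poly_pcompose add.commute)

lemma degree_shiftY [simp]: "degree (shiftY \<beta> (p :: 'a::idom bpoly)) = degree p"
  by (simp add: shiftY_def degree_pcompose)

lemma shiftY_nonzero: "p \<noteq> 0 \<Longrightarrow> shiftY \<beta> p \<noteq> 0"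
  using shiftY_shiftY[of "- \<beta>" \<beta> p] by (auto simp: shiftY_def)

lemma wdeg_shiftY_le: "wdeg q (shiftY \<beta> p) \<le> wdeg q (p :: 'a::comm_ring_1 bpoly)"
proof -
  have "shiftY \<beta> p = (\<Sum>j\<le>degree p. [:coeff p j:] * (Yp + [:[:\<beta>:]:]) ^ j)"
    unfolding shiftY_def pcompose_altdef
    by (subst poly_altdef_le[OF map_poly_degree_leq]) (simp add: coeff_map_poly Yp_def)
  also have "wdeg q \<dots> \<le> wdeg q p"
  proof (rule wdeg_sum)
    fix j
    show "wdeg q ([:coeff p j:] * (Yp + [:[:\<beta>:]:]) ^ j) \<le> wdeg q p"
    proof (cases "coeff p j = 0")
      case False
      have "wdeg q (Yp + [:[:\<beta>:]:] :: 'a bpoly) \<le> q + 1"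
        using wdeg_add[of q "Yp :: 'a bpoly" "[:[:\<beta>:]:]"] wdeg_Yp[of q, where 'a='a] by simp
      then have "wdeg q ((Yp + [:[:\<beta>:]:]) ^ j :: 'a bpoly) \<le> j * (q + 1)"
        using wdeg_power[of q "Yp + [:[:\<beta>:]:]" j] mult_le_mono2 order_trans by blast
      then have "wdeg q ([:coeff p j:] * (Yp + [:[:\<beta>:]:]) ^ j) \<le> q * degree (coeff p j) + j * (q + 1)"
        using wdeg_mult[of q "[:coeff p j:]"] wdeg_const_poly[of q "coeff p j"] by (meson add_mono order_trans)
      also have "\<dots> \<le> wdeg q p"
        by (rule column_mdeg_le_wdeg[OF False])
      finally show ?thesis .
    qed simp
  qed
  finally show ?thesis .
qed

lemma hred_prod_shiftY:
  fixes L :: "'a::idom bpoly"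
  assumes q: "2 \<le> q" and L: "inR q L" "L \<noteq> 0" and A: "finite A"
  shows "hred q (\<Prod>\<beta>\<in>A. shiftY \<beta> L) \<noteq> 0 \<and> wdeg q (hred q (\<Prod>\<beta>\<in>A. shiftY \<beta> L)) \<le> card A * wdeg q L"
  using A
proof (induction A rule: finite_induct)
  case empty
  have "hred q 1 = (1 :: 'a bpoly)"
    using q by (intro hred_unique) (simp_all add: inR_def)
  then show ?case
    by simp
next
  case (insert \<beta> A)
  define N where "N = (\<Prod>\<beta>\<in>A. shiftY \<beta> L)"
  have red: "hred q (\<Prod>\<beta>\<in>insert \<beta> A. shiftY \<beta> L) = hred q (shiftY \<beta> L * hred q N)"
    unfolding N_def using insert(1,2) q by (simp add: hred_heq_cong heq_mult_left heq_hred)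
  have shifted: "inR q (shiftY \<beta> L)" "shiftY \<beta> L \<noteq> 0"
    using L by (simp_all add: inR_def shiftY_nonzero)
  have "hred q (shiftY \<beta> L * hred q N) \<noteq> 0"
    using hred_mult_nonzero[OF q shifted(1) inR_hred[OF q] shifted(2)] insert(3) unfolding N_def by simp
  moreover have "wdeg q (hred q (shiftY \<beta> L * hred q N)) \<le> wdeg q (shiftY \<beta> L) + wdeg q (hred q N)"
    using wdeg_hred_le[OF q] wdeg_mult order_trans by blast
  ultimately show ?case
    using insert(1,2,3) wdeg_shiftY_le[of q \<beta> L] unfolding red N_def by simp
qed

lemma poly_eq_const_if_card:
  fixes p :: "'a::idom poly"
  assumes "degree p < card S" "\<And>x. x \<in> S \<Longrightarrow> poly p x = c"
  shows "p = [:c:]"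
proof (rule ccontr)
  assume "p \<noteq> [:c:]"
  then have ne: "p - [:c:] \<noteq> 0"
    by simp
  have "card S \<le> card {x. poly (p - [:c:]) x = 0}"
    using assms(2) by (intro card_mono[OF poly_roots_finite[OF ne]]) auto
  also have "\<dots> \<le> degree (p - [:c:])"
    by (rule card_poly_roots_bound[OF ne])
  also have "\<dots> \<le> degree p"
    using degree_diff_le_max[of p "[:c:]"] by simp
  finally show False
    using assms(1) by simp
qed

context hermitian_field
begin

lemma shiftY_hermH:
  assumes "\<beta> ^ q + \<beta> = (0 :: 'a)"
  shows "shiftY \<beta> (hermH q) = hermH q"
proof -
  have "shiftY \<beta> (hermH q) = (Yp + [:[:\<beta>:]:]) ^ q + (Yp + [:[:\<beta>:]:]) - Xp ^ (q + 1)"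
    by (simp add: hermH_def shiftY_Yp del: power_Suc)
  also have "(Yp + [:[:\<beta>:]:]) ^ q = Yp ^ q + ([:[:\<beta> ^ q:]:] :: 'a bpoly)"
    by (simp add: frobenius_add poly_const_pow)
  finally have "shiftY \<beta> (hermH q) = hermH q + [:[:\<beta> ^ q + \<beta>:]:]"
    by (simp add: hermH_def algebra_simps del: power_Suc)
  with assms show ?thesis
    by simp
qed

lemma shiftY_heq:
  assumes "\<beta> ^ q + \<beta> = (0 :: 'a)" "heq q x y"
  shows "heq q (shiftY \<beta> x) (shiftY \<beta> y)"
proof -
  obtain u where "x = y + u * hermH q"
    using assms(2) unfolding heq_iff by blast
  then have "shiftY \<beta> x = shiftY \<beta> y + shiftY \<beta> u * hermH q"
    using shiftY_hermH[OF assms(1)] by simp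
  then show ?thesis
    unfolding heq_iff by blast
qed

lemma vanishes_to_shiftY:
  assumes "\<beta> ^ q + \<beta> = (0 :: 'a)" "vanishes_to q (a, c) n F"
  shows "vanishes_to q (a, c - \<beta>) n (shiftY \<beta> F)"
proof -
  obtain g a' where g: "evalH g (a, c) \<noteq> 0" "heq q (g * F) (x_minus a ^ n * a')"
    using assms(2) unfolding vanishes_to_def by auto
  then have "heq q (shiftY \<beta> g * shiftY \<beta> F) (x_minus a ^ n * shiftY \<beta> a')"
    using shiftY_heq[OF assms(1) g(2)] by simp
  moreover have "evalH (shiftY \<beta> g) (a, c - \<beta>) \<noteq> 0"
    using g(1) by (simp add: evalH_shiftY)
  ultimately show ?thesis
    by (intro vanishes_toI[of "shiftY \<beta> g"]) simp_all
qed

text \<open>The translations \<open>Y \<mapsto> Y + \<beta>\<close> with \<open>\<beta>\<^sup>q + \<beta> = 0\<close> are automorphisms of the curve that act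
  simply transitively on the \<open>q\<close> points above each abscissa.  The product of the
  translates of \<open>L\<close> is invariant, hence reduces to a polynomial \<open>c(X)\<close> in \<open>X\<close> alone, of degree
  at most \<open>wdeg L\<close>; and over each abscissa \<open>a\<close> it vanishes to order \<open>s\<close> once for every error
  point above \<open>a\<close>, so that \<open>(X - a)\<^bsup>s |E\<^sub>a|\<^esup>\<close> divides \<open>c\<close>.\<close>

definition shift_norm :: "'a bpoly \<Rightarrow> 'a bpoly" where
  "shift_norm L = (\<Prod>\<beta>\<in>{\<beta>. \<beta> ^ q + \<beta> = 0}. shiftY \<beta> L)"

lemma shiftY_shift_norm:
  assumes "\<gamma> ^ q + \<gamma> = (0 :: 'a)"
  shows "shiftY \<gamma> (shift_norm L) = shift_norm L"
proof -
  have "shiftY \<gamma> (shift_norm L) = (\<Prod>\<beta>\<in>{\<beta>. \<beta> ^ q + \<beta> = 0}. shiftY (\<beta> + \<gamma>) L)"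
    by (simp add: shift_norm_def shiftY_prod shiftY_shiftY)
  also have "\<dots> = shift_norm L"
    unfolding shift_norm_def using assms
    by (intro prod.reindex_bij_witness[of _ "\<lambda>\<beta>. \<beta> - \<gamma>" "\<lambda>\<beta>. \<beta> + \<gamma>"])
       (simp_all add: trace_add trace_diff)
  finally show ?thesis .
qed

lemma hred_shift_norm:
  assumes L: "inR q L" "L \<noteq> 0"
  obtains c where "hred q (shift_norm L) = [:c:]" "c \<noteq> 0" "degree c \<le> wdeg q L"
proof -
  define r where "r = hred q (shift_norm L)"
  have r: "r \<noteq> 0" "wdeg q r \<le> q * wdeg q L"
    using hred_prod_shiftY[OF q_ge_2 L, of "{\<beta>. \<beta> ^ q + \<beta> = 0}"]
    unfolding r_def shift_norm_def by (simp_all add: card_trace_kernel)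
  have invariant: "shiftY \<gamma> r = r" if "\<gamma> ^ q + \<gamma> = 0" for \<gamma>
  proof (rule reduced_heq_imp_eq[OF q_ge_2])
    show "inR q (shiftY \<gamma> r)" "inR q r"
      using inR_hred[OF q_ge_2] by (simp_all add: r_def inR_def)
    have "heq q (shiftY \<gamma> r) (shiftY \<gamma> (shift_norm L))"
      using shiftY_heq[OF that heq_sym[OF heq_hred[OF q_ge_2]]] by (simp add: r_def)
    then show "heq q (shiftY \<gamma> r) r"
      using heq_trans heq_hred[OF q_ge_2] unfolding shiftY_shift_norm[OF that] r_def by blast
  qed
  have "r = [:coeff r 0:]"
  proof (rule poly_eq_const_if_card)
    show "degree r < card ((\<lambda>\<gamma>. [:\<gamma>:]) ` {\<gamma> :: 'a. \<gamma> ^ q + \<gamma> = 0})"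
      using inR_hred[OF q_ge_2] card_trace_kernel
      by (simp add: r_def inR_def card_image inj_on_def)
    show "poly r x = coeff r 0" if x: "x \<in> (\<lambda>\<gamma>. [:\<gamma>:]) ` {\<gamma> :: 'a. \<gamma> ^ q + \<gamma> = 0}" for x
    proof -
      obtain \<gamma> where \<gamma>: "\<gamma> ^ q + \<gamma> = 0" "x = [:\<gamma>:]"
        using x by blast
      have "poly r x = poly (shiftY \<gamma> r) 0"
        by (simp add: \<gamma>(2) shiftY_def poly_pcompose)
      also have "\<dots> = coeff r 0"
        by (simp add: invariant[OF \<gamma>(1)] poly_0_coeff_0)
      finally show ?thesis .
    qed
  qed
  moreover have "q * degree (coeff r 0) \<le> wdeg q r"
    using mdeg_le_wdeg[of r "degree (coeff r 0)" 0 q] r(1) \<open>r = [:coeff r 0:]\<close>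
    by (cases "coeff r 0 = 0") (auto simp: hcoeff_def mdeg_def mult.commute)
  then have "degree (coeff r 0) \<le> wdeg q L"
    using r(2) q_ge_2 by (meson order_trans mult_le_cancel1 not_numeral_le_zero le0 not_less)
  ultimately show ?thesis
    using r(1) by (intro that[of "coeff r 0"]) (auto simp: r_def)
qed

lemma vanishes_to_shift_norm:
  assumes E: "E \<subseteq> hpts q" and van: "\<And>P. P \<in> E \<Longrightarrow> vanishes_to q P s L" and b0: "(a, b0) \<in> E"
  shows "vanishes_to q (a, b0) (s * card {b. (a, b) \<in> E}) (shift_norm L)"
proof -
  define K where "K = {\<beta> :: 'a. \<beta> ^ q + \<beta> = 0}"
  define B where "B = (\<lambda>b. b - b0) ` {b. (a, b) \<in> E}"
  have "b - b0 \<in> K" if "(a, b) \<in> E" for b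
  proof -
    have "(a, b) \<in> hpts q" "(a, b0) \<in> hpts q"
      using E b0 that by auto
    then show ?thesis
      by (simp add: K_def hpts_def trace_diff)
  qed
  then have BK: "B \<subseteq> K"
    unfolding B_def by blast
  have "vanishes_to q (a, b0) s (shiftY \<beta> L)" if "\<beta> \<in> B" for \<beta>
    using vanishes_to_shiftY[of \<beta> a "\<beta> + b0" s L] BK that van unfolding B_def K_def by auto
  then have "vanishes_to q (a, b0) (\<Sum>\<beta>\<in>B. s) (\<Prod>\<beta>\<in>B. shiftY \<beta> L)"
    by (intro vanishes_to_prod) (simp_all add: B_def)
  moreover have "card B = card {b. (a, b) \<in> E}"
    unfolding B_def by (rule card_image) (simp add: inj_on_def)
  moreover have "shift_norm L = (\<Prod>\<beta>\<in>B. shiftY \<beta> L) * (\<Prod>\<beta>\<in>K - B. shiftY \<beta> L)"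
    unfolding shift_norm_def K_def[symmetric] using prod.subset_diff[OF BK] by (simp add: mult.commute)
  ultimately show ?thesis
    by (simp add: vanishes_to_mult_right mult.commute)
qed

theorem lower_bound:
  fixes L :: "'a bpoly"
  assumes L: "inR q L" "L \<noteq> 0"
    and E: "E \<subseteq> hpts q" and van: "\<And>P. P \<in> E \<Longrightarrow> vanishes_to q P s L"
  shows "s * card E \<le> wdeg q L"
proof -
  obtain c where c: "hred q (shift_norm L) = [:c:]" "c \<noteq> 0" "degree c \<le> wdeg q L"
    using hred_shift_norm[OF L] by blast
  define Ea where "Ea a = {b. (a, b) \<in> E}" for a
  have "[:-a, 1:] ^ (s * card (Ea a)) dvd c" if a: "a \<in> fst ` E" for a
  proof -
    obtain b0 where b0: "(a, b0) \<in> E"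
      using a by force
    have "vanishes_to q (a, b0) (s * card (Ea a)) [:c:]"
      using vanishes_to_heq[OF vanishes_to_shift_norm[OF E van b0] heq_hred[OF q_ge_2]] c(1)
      unfolding Ea_def by simp
    then show ?thesis
      using vanishes_to_const_imp_dvd[OF q_ge_2] E b0 by fastforce
  qed
  then have order: "s * card (Ea a) \<le> order a c" if "a \<in> fst ` E" for a
    using that c(2) by (simp add: order_divides)
  have "s * card E = (\<Sum>a\<in>fst ` E. s * card (Ea a))"
  proof -
    have "E = (SIGMA a:fst ` E. Ea a)"
      unfolding Ea_def by force
    then have "card E = (\<Sum>a\<in>fst ` E. card (Ea a))"
      by (metis card_SigmaI finite finite_imageI)
    then show ?thesis
      by (simp add: sum_distrib_left)
  qed
  also have "\<dots> \<le> (\<Sum>a\<in>fst ` E. order a c)"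
    using order by (rule sum_mono)
  also have "\<dots> = (\<Sum>a\<in>fst ` E \<inter> {x. poly c x = 0}. order a c)"
    by (rule sum.mono_neutral_right) (auto simp: order_0I)
  also have "\<dots> \<le> (\<Sum>a | poly c a = 0. order a c)"
    by (rule sum_mono2) (auto intro: poly_roots_finite[OF c(2)])
  also have "\<dots> \<le> degree c"
    by (rule sum_order_le_degree[OF c(2)])
  finally show ?thesis
    using c(3) by linarith
qed

end

section \<open>The upper bound\<close>

definition monomials :: "nat \<Rightarrow> nat \<Rightarrow> (nat \<times> nat) set" where
  "monomials q m = {(i, j). j < q \<and> mdeg q i j \<le> m}"

lemma finite_monomials: "1 \<le> q \<Longrightarrow> finite (monomials q m)"
proof -
  assume q: "1 \<le> q"
  have "i \<le> m" if "(i, j) \<in> monomials q m" for i j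
  proof -
    have "i \<le> i * q" "mdeg q i j \<le> m"
      using q that by (simp_all add: monomials_def)
    then show ?thesis
      unfolding mdeg_def by linarith
  qed
  then have "monomials q m \<subseteq> {..m} \<times> {..<q}"
    by (auto simp: monomials_def)
  then show ?thesis
    by (rule finite_subset) simp
qed

lemma card_less_pairs: "card {(d, r). d < r \<and> r < q} = q * (q - 1) div 2"
proof -
  have "{(d, r). d < r \<and> r < q} = (\<lambda>(r, d). (d, r)) ` (SIGMA r:{..<q}. {..<r})"
    by auto
  then have "card {(d, r). d < r \<and> r < q} = (\<Sum>r<q. r)"
    by (simp add: card_image inj_on_def)
  also have "\<dots> = q * (q - 1) div 2"
  proof (cases q)
    case (Suc n)
    have "(\<Sum>r<Suc n. r) = (\<Sum>r\<in>{0..n}. r)"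
      by (simp only: atLeast0AtMost lessThan_Suc_atMost)
    also have "\<dots> = n * Suc n div 2"
      by (rule gauss_sum_nat)
    finally show ?thesis
      using Suc by (simp add: mult.commute)
  qed simp
  finally show ?thesis .
qed

text \<open>Every \<open>n\<close> with \<open>n mod q \<le> n div q\<close> is the weight of the monomial \<open>X\<^sup>i Y\<^sup>j\<close> with
  \<open>j = n mod q\<close>; the remaining \<open>n\<close> (the Weierstrass gaps) inject into the pairs \<open>d < r < q\<close>,
  of which there are \<open>q (q - 1) / 2\<close>.\<close>

lemma card_monomials_ge:
  assumes q: "1 \<le> q"
  shows "m + 1 \<le> card (monomials q m) + q * (q - 1) div 2"
proof -
  define S where "S = {n. n \<le> m \<and> n mod q \<le> n div q}"
  define T where "T = {(d, r). d < r \<and> r < q}"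
  have "S \<subseteq> (\<lambda>(i, j). mdeg q i j) ` monomials q m"
  proof
    fix n
    assume n: "n \<in> S"
    have "mdeg q (n div q - n mod q) (n mod q) = n"
      using n by (simp add: S_def mdeg_def algebra_simps)
    then show "n \<in> (\<lambda>(i, j). mdeg q i j) ` monomials q m"
      using n q by (intro image_eqI[of _ _ "(n div q - n mod q, n mod q)"]) (auto simp: S_def monomials_def)
  qed
  then have "card S \<le> card ((\<lambda>(i, j). mdeg q i j) ` monomials q m)"
    using finite_monomials[OF q] by (intro card_mono) simp_all
  also have "\<dots> \<le> card (monomials q m)"
    by (rule card_image_le[OF finite_monomials[OF q]])
  finally have "card S \<le> card (monomials q m)" .
  moreover have "card ({..m} - S) \<le> card T"
  proof (rule card_inj_on_le[of "\<lambda>n. (n div q, n mod q)"])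
    show "inj_on (\<lambda>n. (n div q, n mod q)) ({..m} - S)"
      by (auto simp: inj_on_def) (metis div_mult_mod_eq)
    show "(\<lambda>n. (n div q, n mod q)) ` ({..m} - S) \<subseteq> T"
      using q by (auto simp: S_def T_def)
    show "finite T"
      by (rule finite_subset[of _ "{..<q} \<times> {..<q}"]) (auto simp: T_def)
  qed
  moreover have "card T = q * (q - 1) div 2"
    unfolding T_def by (rule card_less_pairs)
  moreover have Sm: "S \<subseteq> {..m}"
    by (auto simp: S_def)
  then have "card S \<le> card {..m}"
    by (rule card_mono[OF finite_atMost])
  with Sm have "card {..m} = card S + card ({..m} - S)"
    by (simp add: card_Diff_subset finite_subset)
  ultimately show ?thesis
    by simp
qed

definition lincomb :: "nat \<Rightarrow> nat \<Rightarrow> (nat \<times> nat \<Rightarrow> 'a::comm_ring_1) \<Rightarrow> 'a bpoly" where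
  "lincomb q m c = (\<Sum>x\<in>monomials q m. monom (monom (c x) (fst x)) (snd x))"

text \<open>\<open>Lspace q m\<close> is the Riemann--Roch space \<open>L(m P\<^sub>\<infinity>)\<close>: the \<open>\<bbbF>\<close>-span of the reduced
  monomials of weight at most \<open>m\<close>.\<close>

definition Lspace :: "nat \<Rightarrow> nat \<Rightarrow> 'a::comm_ring_1 bpoly set" where
  "Lspace q m = lincomb q m ` (monomials q m \<rightarrow>\<^sub>E UNIV)"

lemma hcoeff_lincomb:
  assumes "1 \<le> q"
  shows "hcoeff (lincomb q m c) i j = (if (i, j) \<in> monomials q m then c (i, j) else 0)"
proof -
  have "hcoeff (lincomb q m c) i j = (\<Sum>x\<in>monomials q m. if x = (i, j) then c x else 0)"
    unfolding lincomb_def hcoeff_sum by (intro sum.cong refl) (auto simp: hcoeff_monom_monom)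
  also have "\<dots> = (if (i, j) \<in> monomials q m then c (i, j) else 0)"
    using finite_monomials[OF assms] by (simp add: sum.delta')
  finally show ?thesis .
qed

lemma Lspace_inR_wdeg:
  assumes q: "1 \<le> q" and p: "p \<in> Lspace q m"
  shows "inR q p" "wdeg q p \<le> m"
proof -
  obtain c where c: "p = lincomb q m c"
    using p unfolding Lspace_def by blast
  have support: "(i, j) \<in> monomials q m" if "hcoeff p i j \<noteq> 0" for i j
    using that unfolding c hcoeff_lincomb[OF q] by (auto split: if_splits)
  then show "wdeg q p \<le> m"
    by (intro wdeg_leI) (auto simp: monomials_def)
  show "inR q p"
  proof (cases "p = 0")
    case False
    then have "coeff p (degree p) \<noteq> 0"
      by simp
    then obtain i where "hcoeff p i (degree p) \<noteq> 0"
      unfolding hcoeff_def using leading_coeff_0_iff by blast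
    then show ?thesis
      using support by (auto simp: inR_def monomials_def)
  qed (use q in \<open>simp add: inR_def\<close>)
qed

lemma card_Lspace:
  assumes q: "1 \<le> q"
  shows "card (Lspace q m :: 'a::{finite,comm_ring_1} bpoly set) =
    card (UNIV :: 'a set) ^ card (monomials q m)"
proof -
  have "inj_on (lincomb q m :: _ \<Rightarrow> 'a bpoly) (monomials q m \<rightarrow>\<^sub>E UNIV)"
  proof (rule inj_onI)
    fix c1 c2 :: "nat \<times> nat \<Rightarrow> 'a"
    assume c: "c1 \<in> monomials q m \<rightarrow>\<^sub>E UNIV" "c2 \<in> monomials q m \<rightarrow>\<^sub>E UNIV"
      "lincomb q m c1 = lincomb q m c2"
    show "c1 = c2"
    proof (rule ext)
      fix x :: "nat \<times> nat"
      show "c1 x = c2 x"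
      proof (cases "x \<in> monomials q m")
        case True
        have "hcoeff (lincomb q m c1) (fst x) (snd x) = hcoeff (lincomb q m c2) (fst x) (snd x)"
          using c(3) by simp
        with True show ?thesis
          by (simp add: hcoeff_lincomb[OF q])
      next
        case False
        with c(1,2) show ?thesis
          by (cases x) (simp add: PiE_def extensional_def)
      qed
    qed
  qed
  then have "card (Lspace q m :: 'a bpoly set) = card (monomials q m \<rightarrow>\<^sub>E (UNIV :: 'a set))"
    unfolding Lspace_def by (rule card_image)
  then show ?thesis
    using finite_monomials[OF q] by (simp add: card_PiE)
qed

lemma finite_Lspace: "1 \<le> q \<Longrightarrow> finite (Lspace q m :: 'a::{finite,comm_ring_1} bpoly set)"
  unfolding Lspace_def by (intro finite_imageI finite_PiE finite_monomials) simp_all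

definition lin_closed :: "'a::comm_ring_1 bpoly set \<Rightarrow> bool" where
  "lin_closed W \<longleftrightarrow> (\<forall>f1\<in>W. \<forall>f2\<in>W. \<forall>\<alpha> \<beta>. smult [:\<alpha>:] f1 + smult [:\<beta>:] f2 \<in> W)"

lemma lin_closed_Lspace: "1 \<le> q \<Longrightarrow> lin_closed (Lspace q m)"
  unfolding lin_closed_def
proof (intro ballI allI)
  fix f1 f2 :: "'a bpoly" and \<alpha> \<beta>
  assume q: "1 \<le> q" and f: "f1 \<in> Lspace q m" "f2 \<in> Lspace q m"
  then obtain c1 c2 where c: "f1 = lincomb q m c1" "f2 = lincomb q m c2"
    unfolding Lspace_def by blast
  define c where "c = restrict (\<lambda>x. \<alpha> * c1 x + \<beta> * c2 x) (monomials q m)"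
  have "smult [:\<alpha>:] f1 + smult [:\<beta>:] f2 = lincomb q m c"
    by (rule hcoeff_eqI) (simp add: c hcoeff_lincomb[OF q] c_def)
  moreover have "c \<in> monomials q m \<rightarrow>\<^sub>E UNIV"
    by (simp add: c_def)
  ultimately show "smult [:\<alpha>:] f1 + smult [:\<beta>:] f2 \<in> Lspace q m"
    unfolding Lspace_def by blast
qed

lemma lin_closed_Int: "lin_closed A \<Longrightarrow> lin_closed B \<Longrightarrow> lin_closed (A \<inter> B)"
  unfolding lin_closed_def by blast

lemma smult_const_eq_mult: "smult [:\<alpha>:] f = [:[:\<alpha>:]:] * f"
  by simp

lemma lin_closed_vanishes_to_all: "lin_closed {F. \<forall>P\<in>E. vanishes_to q P n F}"
  unfolding lin_closed_def smult_const_eq_mult mem_Collect_eq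
  by (intro ballI allI vanishes_to_add vanishes_to_mult_left) simp_all

lemma lin_closed_vanishes_to: "lin_closed {F. vanishes_to q P n F}"
  using lin_closed_vanishes_to_all[of "{P}"] by simp

context hermitian_field
begin

text \<open>Raising the vanishing order at \<open>P\<close> by one is a single linear condition.\<close>

lemma vanishes_to_Suc_diff:
  fixes P :: "'a \<times> 'a"
  assumes P: "P \<in> hpts q" and f1: "vanishes_to q P n f1" "\<not> vanishes_to q P (Suc n) f1"
    and f: "vanishes_to q P n f"
  obtains c where "vanishes_to q P (Suc n) (f - smult [:c:] f1)"
proof -
  obtain g1 a1 where g1: "evalH g1 P \<noteq> 0" "heq q (g1 * f1) (x_minus (fst P) ^ n * a1)"
    using f1(1) unfolding vanishes_to_def by blast
  obtain g a where g: "evalH g P \<noteq> 0" "heq q (g * f) (x_minus (fst P) ^ n * a)"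
    using f unfolding vanishes_to_def by blast
  have a1: "evalH a1 P \<noteq> 0"
    using vanishes_to_SucI[OF P g1] f1(2) by blast
  define c where "c = (evalH g1 P * evalH a P) / (evalH g P * evalH a1 P)"
  have "heq q (g1 * (g * f) - [:[:c:]:] * g * (g1 * f1))
      (g1 * (x_minus (fst P) ^ n * a) - [:[:c:]:] * g * (x_minus (fst P) ^ n * a1))"
    by (intro heq_diff heq_mult_left g(2) g1(2))
  then have "heq q ((g * g1) * (f - smult [:c:] f1))
      (x_minus (fst P) ^ n * (g1 * a - [:[:c:]:] * g * a1))"
    by (simp only: smult_const_eq_mult right_diff_distrib mult_ac)
  moreover have "evalH (g1 * a - [:[:c:]:] * g * a1) P = 0"
    using g(1) a1 by (simp add: c_def field_simps)
  moreover have "evalH (g * g1) P \<noteq> 0"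
    using g(1) g1(1) by simp
  ultimately have "vanishes_to q P (Suc n) (f - smult [:c:] f1)"
    by (intro vanishes_to_SucI[OF P])
  then show ?thesis
    by (rule that)
qed

lemma card_le_vanishes_to_Suc:
  fixes W :: "'a bpoly set" and P :: "'a \<times> 'a"
  assumes P: "P \<in> hpts q" and W: "finite W" "lin_closed W"
    and van: "\<And>F. F \<in> W \<Longrightarrow> vanishes_to q P n F"
  shows "card W \<le> card (UNIV :: 'a set) * card (W \<inter> {F. vanishes_to q P (Suc n) F})"
proof (cases "\<forall>F\<in>W. vanishes_to q P (Suc n) F")
  case True
  then have "W \<inter> {F. vanishes_to q P (Suc n) F} = W"
    by auto
  moreover have "1 \<le> card (UNIV :: 'a set)"
    by (simp add: Suc_le_eq finite_UNIV_card_ge_0)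
  ultimately show ?thesis
    by simp
next
  case False
  then obtain f1 where f1: "f1 \<in> W" "\<not> vanishes_to q P (Suc n) f1"
    by blast
  define W' where "W' = W \<inter> {F. vanishes_to q P (Suc n) F}"
  have "W \<subseteq> (\<Union>c. (\<lambda>w. w + smult [:c:] f1) ` W')"
  proof
    fix f
    assume f: "f \<in> W"
    obtain c where c: "vanishes_to q P (Suc n) (f - smult [:c:] f1)"
      using vanishes_to_Suc_diff[OF P van[OF f1(1)] f1(2) van[OF f]] by blast
    have "smult [:1:] f + smult [:- c:] f1 \<in> W"
      using W(2) f f1(1) unfolding lin_closed_def by blast
    moreover have "smult [:1:] f + smult [:- c:] f1 = f - smult [:c:] f1"
      by (rule poly_eqI) simp
    ultimately have "f - smult [:c:] f1 \<in> W'"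
      using c by (simp add: W'_def)
    then show "f \<in> (\<Union>c. (\<lambda>w. w + smult [:c:] f1) ` W')"
      by (intro UN_I[of c]) force+
  qed
  then have "card W \<le> card (\<Union>c. (\<lambda>w. w + smult [:c:] f1) ` W')"
    by (intro card_mono) (simp_all add: W'_def W(1))
  also have "\<dots> \<le> (\<Sum>c\<in>UNIV. card ((\<lambda>w. w + smult [:c:] f1) ` W'))"
    by (rule card_UN_le) simp
  also have "\<dots> \<le> (\<Sum>c\<in>(UNIV :: 'a set). card W')"
    by (intro sum_mono card_image_le) (simp add: W'_def W(1))
  finally show ?thesis
    by (simp add: W'_def)
qed

lemma card_le_vanishes_to_point:
  fixes W :: "'a bpoly set" and P :: "'a \<times> 'a"
  assumes P: "P \<in> hpts q" and W: "finite W" "lin_closed W"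
  shows "card W \<le> card (UNIV :: 'a set) ^ n * card (W \<inter> {F. vanishes_to q P n F})"
proof (induction n)
  case (Suc n)
  define Wn where "Wn = W \<inter> {F. vanishes_to q P n F}"
  have "card Wn \<le> card (UNIV :: 'a set) * card (Wn \<inter> {F. vanishes_to q P (Suc n) F})"
    using P W by (intro card_le_vanishes_to_Suc) (simp_all add: Wn_def lin_closed_Int lin_closed_vanishes_to)
  also have "Wn \<inter> {F. vanishes_to q P (Suc n) F} = W \<inter> {F. vanishes_to q P (Suc n) F}"
    unfolding Wn_def using vanishes_to_mono[of n "Suc n" q P] by auto
  finally have "card Wn \<le> card (UNIV :: 'a set) * card (W \<inter> {F. vanishes_to q P (Suc n) F})" .
  then have "card (UNIV :: 'a set) ^ n * card Wn \<le>
      card (UNIV :: 'a set) ^ Suc n * card (W \<inter> {F. vanishes_to q P (Suc n) F})"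
    by (simp add: mult.assoc)
  with Suc.IH show ?case
    unfolding Wn_def by linarith
qed simp

lemma card_le_vanishes_to:
  fixes W :: "'a bpoly set"
  assumes E: "finite E" "E \<subseteq> hpts q" and W: "finite W" "lin_closed W"
  shows "card W \<le> card (UNIV :: 'a set) ^ (s * card E) * card (W \<inter> {F. \<forall>P\<in>E. vanishes_to q P s F})"
  using E
proof (induction E rule: finite_induct)
  case (insert P E)
  define N where "N = card (UNIV :: 'a set)"
  define W' where "W' = W \<inter> {F. \<forall>P\<in>E. vanishes_to q P s F}"
  have "card W' \<le> N ^ s * card (W' \<inter> {F. vanishes_to q P s F})"
    unfolding N_def using insert.prems W
    by (intro card_le_vanishes_to_point) (simp_all add: W'_def lin_closed_Int lin_closed_vanishes_to_all)
  also have "W' \<inter> {F. vanishes_to q P s F} = W \<inter> {F. \<forall>P\<in>insert P E. vanishes_to q P s F}"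
    unfolding W'_def by auto
  finally have "card W' \<le> N ^ s * card (W \<inter> {F. \<forall>P\<in>insert P E. vanishes_to q P s F})" .
  moreover have "card W \<le> N ^ (s * card E) * card W'"
    using insert by (simp add: N_def W'_def)
  ultimately have "card W \<le> N ^ (s * card E) * (N ^ s * card (W \<inter> {F. \<forall>P\<in>insert P E. vanishes_to q P s F}))"
    using order_trans mult_le_mono2 by blast
  then show ?case
    using insert(1,2) by (simp add: N_def power_add mult_ac)
qed simp

theorem upper_bound:
  fixes E :: "('a \<times> 'a) set"
  assumes E: "E \<subseteq> hpts q"
  obtains L where "inR q L" "L \<noteq> 0" "\<And>P. P \<in> E \<Longrightarrow> vanishes_to q P s L"
    "wdeg q L \<le> s * card E + q * (q - 1) div 2"
proof -
  have q1: "1 \<le> q"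
    using q_ge_2 by simp
  define m where "m = s * card E + q * (q - 1) div 2"
  define V where "V = (Lspace q m :: 'a bpoly set)"
  define Z where "Z = V \<inter> {F. \<forall>P\<in>E. vanishes_to q P s F}"
  define N where "N = card (UNIV :: 'a set)"
  have N2: "2 \<le> N"
    using q_ge_2 power_mono[OF q_ge_2, of 2] by (simp add: N_def card_field)
  have "N ^ (s * card E) * N = N ^ (s * card E + 1)"
    by simp
  also have "\<dots> \<le> N ^ card (monomials q m)"
    using card_monomials_ge[OF q1, of m] N2 by (intro power_increasing) (simp_all add: m_def)
  also have "\<dots> = card V"
    unfolding V_def N_def by (rule card_Lspace[OF q1, symmetric])
  also have "\<dots> \<le> N ^ (s * card E) * card Z"
    unfolding Z_def V_def N_def
    using E finite_Lspace[OF q1] lin_closed_Lspace[OF q1] by (intro card_le_vanishes_to) simp_all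
  finally have "2 \<le> card Z"
    using N2 by simp
  have "\<not> Z \<subseteq> {0}"
  proof
    assume "Z \<subseteq> {0}"
    then have "card Z \<le> card {0 :: 'a bpoly}"
      by (rule card_mono[rotated]) simp
    with \<open>2 \<le> card Z\<close> show False
      by simp
  qed
  then obtain L where "L \<in> Z" "L \<noteq> 0"
    by blast
  then show ?thesis
    using Lspace_inR_wdeg[OF q1] by (intro that) (auto simp: Z_def V_def m_def)
qed

end

section \<open>The key equation\<close>

definition mbox :: "nat \<Rightarrow> (nat \<Rightarrow> nat) \<Rightarrow> (nat \<Rightarrow> nat) set" where
  "mbox h j = {i \<in> mvecs h. \<forall>\<mu><h. i \<mu> \<le> j \<mu>}"

definition extend0 :: "nat \<Rightarrow> (nat \<Rightarrow> nat) \<Rightarrow> nat \<Rightarrow> nat" where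
  "extend0 h g = (\<lambda>\<mu>. if \<mu> < h then g \<mu> else 0)"

lemma mbox_eq_image: "mbox h j = extend0 h ` (\<Pi>\<^sub>E \<mu>\<in>{..<h}. {..j \<mu>})"
proof
  show "mbox h j \<subseteq> extend0 h ` (\<Pi>\<^sub>E \<mu>\<in>{..<h}. {..j \<mu>})"
  proof
    fix i
    assume i: "i \<in> mbox h j"
    then have "i = extend0 h (restrict i {..<h})"
      unfolding mbox_def mvecs_def extend0_def by (auto simp: fun_eq_iff)
    moreover have "restrict i {..<h} \<in> (\<Pi>\<^sub>E \<mu>\<in>{..<h}. {..j \<mu>})"
      using i unfolding mbox_def by auto
    ultimately show "i \<in> extend0 h ` (\<Pi>\<^sub>E \<mu>\<in>{..<h}. {..j \<mu>})"
      by blast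
  qed
  show "extend0 h ` (\<Pi>\<^sub>E \<mu>\<in>{..<h}. {..j \<mu>}) \<subseteq> mbox h j"
  proof
    fix i
    assume "i \<in> extend0 h ` (\<Pi>\<^sub>E \<mu>\<in>{..<h}. {..j \<mu>})"
    then obtain g where g: "g \<in> (\<Pi>\<^sub>E \<mu>\<in>{..<h}. {..j \<mu>})" "i = extend0 h g"
      by blast
    have "g \<mu> \<le> j \<mu>" if "\<mu> < h" for \<mu>
      using g(1) that by (simp add: PiE_iff)
    then show "i \<in> mbox h j"
      unfolding g(2) mbox_def mvecs_def extend0_def by simp
  qed
qed

lemma finite_mbox: "finite (mbox h j)"
  unfolding mbox_eq_image by (intro finite_imageI finite_PiE) simp_all

lemma mpow_add:
  fixes x y :: "nat \<Rightarrow> 'a::comm_ring_1 bpoly"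
  shows "mpow h (\<lambda>\<mu>. x \<mu> + y \<mu>) j =
    (\<Sum>i\<in>mbox h j. of_nat (mbinom h j i) * mpow h x (\<lambda>\<mu>. j \<mu> - i \<mu>) * mpow h y i)"
proof -
  define t where "t \<mu> k = of_nat (j \<mu> choose k) * y \<mu> ^ k * x \<mu> ^ (j \<mu> - k)" for \<mu> k
  have "mpow h (\<lambda>\<mu>. x \<mu> + y \<mu>) j = (\<Prod>\<mu><h. \<Sum>k\<le>j \<mu>. t \<mu> k)"
    unfolding mpow_def t_def by (intro prod.cong refl) (subst add.commute, rule binomial_ring)
  also have "\<dots> = (\<Sum>g\<in>(\<Pi>\<^sub>E \<mu>\<in>{..<h}. {..j \<mu>}). \<Prod>\<mu><h. t \<mu> (g \<mu>))"
    by (rule prod_sum_PiE) simp_all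
  also have "\<dots> = (\<Sum>i\<in>mbox h j. \<Prod>\<mu><h. t \<mu> (i \<mu>))"
  proof (rule sum.reindex_bij_witness[of _ "\<lambda>i. restrict i {..<h}" "extend0 h"])
    fix i
    assume "i \<in> mbox h j"
    then show "extend0 h (restrict i {..<h}) = i" "restrict i {..<h} \<in> (\<Pi>\<^sub>E \<mu>\<in>{..<h}. {..j \<mu>})"
      unfolding mbox_def mvecs_def extend0_def by (auto simp: fun_eq_iff)
  next
    fix g
    assume g: "g \<in> (\<Pi>\<^sub>E \<mu>\<in>{..<h}. {..j \<mu>})"
    then show "restrict (extend0 h g) {..<h} = g"
      unfolding extend0_def by (auto simp: fun_eq_iff PiE_def extensional_def)
    show "extend0 h g \<in> mbox h j"
      using g unfolding mbox_eq_image by blast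
    show "(\<Prod>\<mu><h. t \<mu> (extend0 h g \<mu>)) = (\<Prod>\<mu><h. t \<mu> (g \<mu>))"
      unfolding extend0_def by (intro prod.cong refl) simp
  qed
  also have "\<dots> = (\<Sum>i\<in>mbox h j. of_nat (mbinom h j i) * mpow h x (\<lambda>\<mu>. j \<mu> - i \<mu>) * mpow h y i)"
    unfolding mpow_def mbinom_def t_def by (intro sum.cong refl) (simp add: prod.distrib of_nat_prod mult_ac)
  finally show ?thesis .
qed

lemma Acoef_eq_0:
  assumes "i \<in> mvecs h" "i \<notin> mbox h j"
  shows "Acoef q h Rv i j = 0"
proof -
  obtain \<mu> where "\<mu> < h" "j \<mu> < i \<mu>"
    using assms unfolding mbox_def by (auto simp: not_le)
  then have "mbinom h j i = 0"
    unfolding mbinom_def by (intro prod_zero) auto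
  then show ?thesis
    by (simp add: Acoef_def)
qed

lemma mabs_mono: "i \<in> mbox h j \<Longrightarrow> mabs h i \<le> mabs h j"
  unfolding mabs_def mbox_def by (intro sum_mono) auto

lemma finite_Iset: "finite (Iset h s)"
proof (rule finite_subset[OF _ finite_mbox])
  show "Iset h s \<subseteq> mbox h (\<lambda>_. s)"
  proof
    fix i
    assume i: "i \<in> Iset h s"
    have "i \<mu> \<le> s" if "\<mu> < h" for \<mu>
      using member_le_sum[of \<mu> "{..<h}" i] that i by (simp add: Iset_def mabs_def)
    with i show "i \<in> mbox h (\<lambda>_. s)"
      by (simp add: Iset_def mbox_def)
  qed
qed

text \<open>Expanding \<open>f\<^sup>j = (R + (f - R))\<^sup>j\<close> splits \<open>\<Lambda> f\<^sup>j\<close> into the terms \<open>\<Omega>\<^sub>i A\<^sub>i\<^sub>,\<^sub>j\<close> with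
  \<open>|i| < s\<close> and a remainder made of the terms \<open>\<Lambda> (f - R)\<^sup>i\<close> with \<open>|i| \<ge> s\<close>.\<close>

lemma locator_mpow_heq:
  fixes Lam :: "'a::comm_ring_1 bpoly"
  assumes Omega: "\<And>i. i \<in> Iset h s \<Longrightarrow>
      heq q (Lam * mpow h (\<lambda>\<mu>. f \<mu> - Rv \<mu>) i) (Gp q ^ mabs h i * Omega i)"
    and j: "j \<in> mvecs h"
  shows "heq q (Lam * mpow h f j) ((\<Sum>i\<in>Iset h s. Omega i * Acoef q h Rv i j) +
    (\<Sum>i\<in>mbox h j - Iset h s. of_nat (mbinom h j i) * mpow h Rv (\<lambda>\<mu>. j \<mu> - i \<mu>) *
       (Lam * mpow h (\<lambda>\<mu>. f \<mu> - Rv \<mu>) i)))"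
proof -
  define T where "T i = of_nat (mbinom h j i) * mpow h Rv (\<lambda>\<mu>. j \<mu> - i \<mu>) *
    (Lam * mpow h (\<lambda>\<mu>. f \<mu> - Rv \<mu>) i)" for i
  have "Lam * mpow h f j = Lam * mpow h (\<lambda>\<mu>. Rv \<mu> + (f \<mu> - Rv \<mu>)) j"
    by simp
  also have "\<dots> = (\<Sum>i\<in>mbox h j. T i)"
    unfolding mpow_add T_def by (simp add: sum_distrib_left mult_ac)
  also have "\<dots> = (\<Sum>i\<in>mbox h j \<inter> Iset h s. T i) + (\<Sum>i\<in>mbox h j - Iset h s. T i)"
    by (rule sum.Int_Diff[OF finite_mbox])
  finally have split: "Lam * mpow h f j = \<dots>" .
  have "heq q (T i) (Omega i * Acoef q h Rv i j)" if "i \<in> Iset h s" for i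
  proof -
    have "heq q (T i) (of_nat (mbinom h j i) * mpow h Rv (\<lambda>\<mu>. j \<mu> - i \<mu>) * (Gp q ^ mabs h i * Omega i))"
      unfolding T_def by (rule heq_mult_left[OF Omega[OF that]])
    also have "of_nat (mbinom h j i) * mpow h Rv (\<lambda>\<mu>. j \<mu> - i \<mu>) * (Gp q ^ mabs h i * Omega i) =
        Omega i * Acoef q h Rv i j"
      by (simp add: Acoef_def mult_ac)
    finally show ?thesis .
  qed
  then have "heq q (\<Sum>i\<in>mbox h j \<inter> Iset h s. T i) (\<Sum>i\<in>mbox h j \<inter> Iset h s. Omega i * Acoef q h Rv i j)"
    by (intro heq_sum) simp
  also have "(\<Sum>i\<in>mbox h j \<inter> Iset h s. Omega i * Acoef q h Rv i j) = (\<Sum>i\<in>Iset h s. Omega i * Acoef q h Rv i j)"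
  proof (rule sum.mono_neutral_left[OF finite_Iset])
    show "\<forall>i\<in>Iset h s - mbox h j \<inter> Iset h s. Omega i * Acoef q h Rv i j = 0"
    proof
      fix i
      assume "i \<in> Iset h s - mbox h j \<inter> Iset h s"
      then have "i \<in> mvecs h" "i \<notin> mbox h j"
        by (auto simp: Iset_def)
      then show "Omega i * Acoef q h Rv i j = 0"
        by (simp add: Acoef_eq_0)
    qed
  qed auto
  finally show ?thesis
    unfolding split T_def by (intro heq_add heq_refl)
qed

lemma wdeg_hred_locator_mpow:
  fixes Lam :: "'a::idom bpoly" and mH :: int
  assumes "2 \<le> q" and f: "\<And>\<mu>. \<mu> < h \<Longrightarrow> int (wdeg q (f \<mu>)) \<le> mH"
  shows "int (wdeg q (hred q (Lam * mpow h f j))) \<le> int (wdeg q Lam) + int (mabs h j) * mH"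
proof -
  have "wdeg q (mpow h f j) \<le> (\<Sum>\<mu><h. j \<mu> * wdeg q (f \<mu>))"
    unfolding mpow_def by (rule order_trans[OF wdeg_prod sum_mono[OF wdeg_power]])
  then have "int (wdeg q (mpow h f j)) \<le> int (\<Sum>\<mu><h. j \<mu> * wdeg q (f \<mu>))"
    by (simp only: of_nat_le_iff)
  also have "\<dots> = (\<Sum>\<mu><h. int (j \<mu>) * int (wdeg q (f \<mu>)))"
    by (simp add: of_nat_sum)
  also have "\<dots> \<le> (\<Sum>\<mu><h. int (j \<mu>) * mH)"
    by (intro sum_mono mult_left_mono f) simp_all
  also have "\<dots> = int (mabs h j) * mH"
    by (simp add: mabs_def sum_distrib_right)
  finally have "int (wdeg q (mpow h f j)) \<le> int (mabs h j) * mH" .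
  moreover have "wdeg q (hred q (Lam * mpow h f j)) \<le> wdeg q Lam + wdeg q (mpow h f j)"
    using wdeg_hred_le[OF assms(1)] wdeg_mult order_trans by blast
  ultimately show ?thesis
    by linarith
qed

lemma Omega_zero_eq:
  fixes Lam :: "'a::idom bpoly"
  assumes "2 \<le> q" "1 \<le> s" "inR q Lam" "\<forall>i\<in>Iset h s. inR q (Omega i)"
    and Omega: "\<forall>i\<in>Iset h s. heq q (Lam * mpow h (\<lambda>\<mu>. f \<mu> - Rv \<mu>) i) (Gp q ^ mabs h i * Omega i)"
  shows "Omega (\<lambda>_. 0) = Lam"
proof -
  have zero: "(\<lambda>_. 0) \<in> Iset h s"
    using assms(2) by (simp add: Iset_def mvecs_def mabs_def)
  then have "heq q Lam (Omega (\<lambda>_. 0))"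
    using Omega[rule_format, OF zero] by (simp add: mpow_def mabs_def)
  with assms(1,3,4) zero show ?thesis
    by (metis heq_sym reduced_heq_imp_eq)
qed

context hermitian_field
begin

context
  fixes h s :: nat and f Rv :: "nat \<Rightarrow> 'a bpoly" and Lam :: "'a bpoly"
    and E :: "('a \<times> 'a) set" and Omega :: "(nat \<Rightarrow> nat) \<Rightarrow> 'a bpoly"
  assumes van: "\<And>P. P \<in> E \<Longrightarrow> vanishes_to q P s Lam"
    and interp: "\<And>\<mu> P. \<mu> < h \<Longrightarrow> P \<in> hpts q \<Longrightarrow> P \<notin> E \<Longrightarrow> evalH (f \<mu> - Rv \<mu>) P = 0"
    and Omega_eq: "\<forall>i\<in>Iset h s. heq q (Lam * mpow h (\<lambda>\<mu>. f \<mu> - Rv \<mu>) i) (Gp q ^ mabs h i * Omega i)"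
begin

text \<open>At an error point \<open>\<Lambda>\<close> vanishes to order \<open>s\<close>; at every other point each \<open>f\<^sub>\<mu> - R\<^sub>\<mu>\<close>
  vanishes, so \<open>(f - R)\<^sup>i\<close> vanishes to order \<open>|i| \<ge> s\<close>.  A function vanishing to order \<open>s\<close> at
  all rational points is a multiple of \<open>G\<^sup>s\<close>.\<close>

lemma locator_mpow_Gp_power_dvd:
  assumes i: "s \<le> mabs h i"
  shows "\<exists>t. heq q (Lam * mpow h (\<lambda>\<mu>. f \<mu> - Rv \<mu>) i) (Gp q ^ s * t)"
proof -
  have "vanishes_to q P s (Lam * mpow h (\<lambda>\<mu>. f \<mu> - Rv \<mu>) i)" if P: "P \<in> hpts q" for P
  proof (cases "P \<in> E")
    case True
    then show ?thesis
      by (simp add: van vanishes_to_mult_right)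
  next
    case False
    have "vanishes_to q P (i \<mu> * 1) ((f \<mu> - Rv \<mu>) ^ i \<mu>)" if "\<mu> < h" for \<mu>
      using vanishes_to_power[OF vanishes_to_1I[OF P interp[OF that P False]]] .
    then have "vanishes_to q P (mabs h i) (mpow h (\<lambda>\<mu>. f \<mu> - Rv \<mu>) i)"
      unfolding mabs_def mpow_def by (intro vanishes_to_prod) simp_all
    then show ?thesis
      by (rule vanishes_to_mult_left[OF vanishes_to_mono[OF i]])
  qed
  then obtain t where "heq q (Lam * mpow h (\<lambda>\<mu>. f \<mu> - Rv \<mu>) i) (Gp q ^ s * t)"
    by (rule Gp_power_dvd_if_vanishes_to)
  then show ?thesis
    by blast
qed

lemma locator_mpow_key_equation:
  assumes j: "j \<in> mvecs h"
  shows "\<exists>t. heq q (Lam * mpow h f j) ((\<Sum>i\<in>Iset h s. Omega i * Acoef q h Rv i j) + Gp q ^ s * t)"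
    and "mabs h j < s \<Longrightarrow> heq q (Lam * mpow h f j) (\<Sum>i\<in>Iset h s. Omega i * Acoef q h Rv i j)"
proof -
  define rest where "rest = (\<Sum>i\<in>mbox h j - Iset h s. of_nat (mbinom h j i) *
      mpow h Rv (\<lambda>\<mu>. j \<mu> - i \<mu>) * (Lam * mpow h (\<lambda>\<mu>. f \<mu> - Rv \<mu>) i))"
  have expand: "heq q (Lam * mpow h f j) ((\<Sum>i\<in>Iset h s. Omega i * Acoef q h Rv i j) + rest)"
    unfolding rest_def using Omega_eq j by (intro locator_mpow_heq) simp_all
  have "\<exists>t. heq q (Lam * mpow h (\<lambda>\<mu>. f \<mu> - Rv \<mu>) i) (Gp q ^ s * t)" if "i \<in> mbox h j - Iset h s" for i
    using that by (intro locator_mpow_Gp_power_dvd) (auto simp: Iset_def mbox_def)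
  then obtain t where "\<And>i. i \<in> mbox h j - Iset h s \<Longrightarrow>
      heq q (Lam * mpow h (\<lambda>\<mu>. f \<mu> - Rv \<mu>) i) (Gp q ^ s * t i)"
    by metis
  then have "heq q rest (\<Sum>i\<in>mbox h j - Iset h s. of_nat (mbinom h j i) *
      mpow h Rv (\<lambda>\<mu>. j \<mu> - i \<mu>) * (Gp q ^ s * t i))"
    unfolding rest_def by (intro heq_sum heq_mult_left)
  then have "heq q rest (Gp q ^ s * (\<Sum>i\<in>mbox h j - Iset h s.
      of_nat (mbinom h j i) * mpow h Rv (\<lambda>\<mu>. j \<mu> - i \<mu>) * t i))"
    by (simp add: sum_distrib_left mult.left_commute)
  then show "\<exists>t. heq q (Lam * mpow h f j) ((\<Sum>i\<in>Iset h s. Omega i * Acoef q h Rv i j) + Gp q ^ s * t)"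
    using heq_trans[OF expand heq_add[OF heq_refl]] by blast
  assume "mabs h j < s"
  then have "i \<in> Iset h s" if "i \<in> mbox h j" for i
    using mabs_mono[OF that] that by (simp add: Iset_def mbox_def)
  then have "mbox h j - Iset h s = {}"
    by blast
  then have "rest = 0"
    by (simp only: rest_def sum.empty)
  with expand show "heq q (Lam * mpow h f j) (\<Sum>i\<in>Iset h s. Omega i * Acoef q h Rv i j)"
    by simp
qed

lemma problem1_solution_from_locator:
  assumes s: "1 \<le> s" and mH: "0 \<le> mH"
    and f: "\<forall>\<mu><h. inL q mH (f \<mu>)"
    and Lam: "inR q Lam" "monicH q Lam"
    and Omega_R: "\<forall>i\<in>Iset h s. inR q (Omega i)"
    and Omega_deg: "\<forall>i\<in>Iset h s. Omega i \<noteq> 0 \<longrightarrow>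
      degH q (Omega i) \<le> degH q Lam + int (mabs h i) * (2 * hgenus q - 1)"
  shows "problem1_solution q h s l mH Rv Omega (\<lambda>j. hred q (Lam * mpow h f j))"
proof -
  have Lam0: "Lam \<noteq> 0"
    using Lam(2) by (simp add: monicH_def)
  have hred_heq: "heq q (hred q (Lam * mpow h f j)) (Lam * mpow h f j)" for j
    using heq_sym[OF heq_hred[OF q_ge_2]] .
  have small: "heq q (hred q (Lam * mpow h f j)) (\<Sum>i\<in>Iset h s. Omega i * Acoef q h Rv i j)"
    if "j \<in> mvecs h" "mabs h j < s" for j
    using heq_trans[OF hred_heq locator_mpow_key_equation(2)[OF that]] .
  have large: "\<exists>t. heq q (hred q (Lam * mpow h f j))
      ((\<Sum>i\<in>Iset h s. Omega i * Acoef q h Rv i j) + Gp q ^ s * t)" if "j \<in> mvecs h" for j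
    using locator_mpow_key_equation(1)[OF that] heq_trans[OF hred_heq] by blast
  have "degH q (hred q (Lam * mpow h f j)) - int (mabs h j) * mH \<le> degH q Lam"
    if "hred q (Lam * mpow h f j) \<noteq> 0" for j
  proof -
    have "int (wdeg q (f \<mu>)) \<le> mH" if "\<mu> < h" for \<mu>
      using f that mH degH_eq_wdeg[of "f \<mu>" q] unfolding inL_def by (cases "f \<mu> = 0") auto
    then show ?thesis
      using wdeg_hred_locator_mpow[OF q_ge_2, of h f mH Lam j] degH_eq_wdeg[OF that] degH_eq_wdeg[OF Lam0]
      by simp
  qed
  then show ?thesis
    unfolding problem1_solution_def Omega_zero_eq[OF q_ge_2 s Lam(1) Omega_R Omega_eq]
    using Lam Omega_R Omega_deg inR_hred[OF q_ge_2] small large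
    by (auto simp: Jset_def)
qed

end

theorem degH_locator_bounds:
  fixes Lam :: "'a bpoly" and E :: "('a \<times> 'a) set"
  assumes E: "E \<subseteq> hpts q" and Lam: "inR q Lam" "Lam \<noteq> 0"
    and van: "\<forall>P\<in>E. val_ge q P s Lam"
    and min: "\<forall>L'. inR q L' \<and> L' \<noteq> 0 \<and> (\<forall>P\<in>E. val_ge q P s L') \<longrightarrow> degH q Lam \<le> degH q L'"
  shows "int s * int (card E) \<le> degH q Lam" "degH q Lam \<le> int s * int (card E) + hgenus q"
proof -
  have val_ge_iff: "val_ge q P s L \<longleftrightarrow> vanishes_to q P s L" if "P \<in> E" for P and L :: "'a bpoly"
    using val_ge_iff_vanishes_to E that by blast
  show "int s * int (card E) \<le> degH q Lam"
    using lower_bound[OF Lam E] van val_ge_iff degH_eq_wdeg[OF Lam(2)] by (simp flip: of_nat_mult)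
  obtain L where L: "inR q L" "L \<noteq> 0" "\<And>P. P \<in> E \<Longrightarrow> vanishes_to q P s L"
    "wdeg q L \<le> s * card E + q * (q - 1) div 2"
    using upper_bound[OF E] by blast
  then have "degH q Lam \<le> degH q L"
    using min val_ge_iff by blast
  also have "\<dots> \<le> int (s * card E + q * (q - 1) div 2)"
    unfolding degH_eq_wdeg[OF L(2)] of_nat_le_iff by (rule L(4))
  finally show "degH q Lam \<le> int s * int (card E) + hgenus q"
    by (simp add: hgenus_def)
qed

end

theorem theorem3:
  fixes q h s l :: nat and mH :: int
    and f Rv :: "nat \<Rightarrow> 'a::{finite,field} bpoly"
    and e :: "nat \<Rightarrow> 'a \<times> 'a \<Rightarrow> 'a"
    and Lam :: "'a bpoly"
    and Omega :: "(nat \<Rightarrow> nat) \<Rightarrow> 'a bpoly"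
  assumes q_pp: "\<exists>p k. prime p \<and> 0 < k \<and> q = p ^ k"
    and card_F: "card (UNIV :: 'a set) = q ^ 2"
    and h_pos: "1 \<le> h"
    and mH_lo: "2 * (hgenus q - 1) < mH" and mH_hi: "mH < int (q ^ 3)"
    and f_L: "\<forall>\<mu><h. inL q mH (f \<mu>)"
    and R_R: "\<forall>\<mu><h. inR q (Rv \<mu>) \<and> (Rv \<mu> = 0 \<or> degH q (Rv \<mu>) < int (q ^ 3) + 2 * hgenus q)"
    and R_interp: "\<forall>\<mu><h. \<forall>P\<in>hpts q. evalH (Rv \<mu>) P = evalH (f \<mu>) P + e \<mu> P"
    and s_pos: "1 \<le> s" and s_le_l: "s \<le> l"
    and Lam_R: "inR q Lam" and Lam_monic: "monicH q Lam"
    and Lam_van: "\<forall>P\<in>{P \<in> hpts q. \<exists>\<mu><h. e \<mu> P \<noteq> 0}. val_ge q P s Lam"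
    and Lam_min: "\<forall>L'. inR q L' \<and> L' \<noteq> 0 \<and>
                        (\<forall>P\<in>{P \<in> hpts q. \<exists>\<mu><h. e \<mu> P \<noteq> 0}. val_ge q P s L')
                        \<longrightarrow> degH q Lam \<le> degH q L'"
    and Omega_R: "\<forall>i\<in>Iset h s. inR q (Omega i)"
    and Omega_deg: "\<forall>i\<in>Iset h s. Omega i \<noteq> 0 \<longrightarrow>
                      degH q (Omega i) \<le> degH q Lam + int (mabs h i) * (2 * hgenus q - 1)"
    and Omega_eq: "\<forall>i\<in>Iset h s.
                     heq q (Lam * mpow h (\<lambda>\<mu>. f \<mu> - Rv \<mu>) i) (Gp q ^ mabs h i * Omega i)"
  shows "problem1_solution q h s l mH Rv Omega (\<lambda>j. hred q (Lam * mpow h f j))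
         \<and> degH q (Omega (\<lambda>_. 0)) = degH q Lam
         \<and> int s * int (card {P \<in> hpts q. \<exists>\<mu><h. e \<mu> P \<noteq> 0}) \<le> degH q Lam
         \<and> degH q Lam \<le> int s * int (card {P \<in> hpts q. \<exists>\<mu><h. e \<mu> P \<noteq> 0}) + hgenus q"
proof -
  interpret hermitian_field q "TYPE('a)"
    using prime_power_eq_CHAR_power[OF q_pp card_F] card_F by unfold_locales
  define E where "E = {P \<in> hpts q. \<exists>\<mu><h. e \<mu> P \<noteq> 0}"
  have "2 * 1 \<le> q * (q - 1)"
    using mult_le_mono[OF q_ge_2, of 1 "q - 1"] q_ge_2 by simp
  then have mH: "0 \<le> mH"
    using mH_lo by (simp add: hgenus_def)
  have van: "vanishes_to q P s Lam" if "P \<in> E" for P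
    using Lam_van val_ge_iff_vanishes_to that unfolding E_def by blast
  have interp: "evalH (f \<mu> - Rv \<mu>) P = 0" if "\<mu> < h" "P \<in> hpts q" "P \<notin> E" for \<mu> P
    using R_interp that unfolding E_def by simp
  have "problem1_solution q h s l mH Rv Omega (\<lambda>j. hred q (Lam * mpow h f j))"
    by (rule problem1_solution_from_locator[OF van interp Omega_eq s_pos mH f_L Lam_R Lam_monic
          Omega_R Omega_deg])
  moreover have "Omega (\<lambda>_. 0) = Lam"
    using Omega_zero_eq[OF q_ge_2 s_pos Lam_R Omega_R Omega_eq] .
  moreover have "int s * int (card E) \<le> degH q Lam" "degH q Lam \<le> int s * int (card E) + hgenus q"
    using Lam_monic Lam_van Lam_min
    by (intro degH_locator_bounds[OF _ Lam_R]; force simp: E_def monicH_def)+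
  ultimately show ?thesis
    unfolding E_def by simp
qed

end
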